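(* Define integers $C_{1^{4}2^{2}4^{-2}}(n)$ and $C_{1^{4}2^{4}4^{-3}}(n)$ by \[ \frac{(q;q)_\infty^{4}\,(q^2;q^2)_\infty^{2}}{(q^4;q^4)_\infty^{2}}=\sum_{n\geq 0} C_{1^{4}2^{2}4^{-2}}(n)\,q^n,\qquad \frac{(q;q)_\infty^{4}\,(q^2;q^2)_\infty^{4}}{(q^4;q^4)_\infty^{3}}=\sum_{n\geq 0} C_{1^{4}2^{4}4^{-3}}(n)\,q^n . \] Then: (1) The sequence $\{\operatorname{sgn}(C_{1^{4}2^{2}4^{-2}}(n))\}_{n\ge1}$ has period $8$; in particular, for every $n\ge1$, \[ \operatorname{sgn}\left(C_{1^{4}2^{2}4^{-2}}(n)\right)=\begin{cases}1&\text{if } n\equiv 0,3,7\pmod 8,\\ -1&\text{if } n\equiv 1,4,5\pmod 8,\\ 0&\text{if } n\equiv 2\pmod 4.\end{cases} \] (2) The sequence $\{\operatorname{sgn}(C_{1^{4}2^{4}4^{-3}}(n))\}_{n\ge1}$ has period $8$; in particular, for every $n\ge1$, \[ \operatorname{sgn}\left(C_{1^{4}2^{4}4^{-3}}(n)\right)=\begin{cases}1&\text{if } n\equiv 0,3,6,7\pmod 8,\\ -1&\text{if } n\equiv 1,2,4,5\pmod 8.\end{cases} \]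
   Context: $(a;q)_\infty:=\prod_{j\geq 0}(1-aq^j)$ denotes the $q$-Pochhammer symbol; the identities are identities of formal power series in $q$. *)

theory Defs
  imports "HOL-Computational_Algebra.Formal_Power_Series"
begin

definition qpoch_inf :: "'a::field fps \<Rightarrow> 'a fps \<Rightarrow> 'a fps" where
  "qpoch_inf a q = lim (\<lambda>N. \<Prod>j<N. (1 - a * q ^ j))"

definition C1 :: "nat \<Rightarrow> rat" where
  "C1 n = fps_nth
     ((qpoch_inf fps_X fps_X) ^ 4 * (qpoch_inf (fps_X^2) (fps_X^2)) ^ 2
        / (qpoch_inf (fps_X^4) (fps_X^4)) ^ 2) n"

definition C2 :: "nat \<Rightarrow> rat" where
  "C2 n = fps_nth
     ((qpoch_inf fps_X fps_X) ^ 4 * (qpoch_inf (fps_X^2) (fps_X^2)) ^ 4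
        / (qpoch_inf (fps_X^4) (fps_X^4)) ^ 3) n"

end

theory Submission
  imports Defs "HOL-Computational_Algebra.Primes"
begin

text \<open>
  Gauss's identity \<open>(q;q)\<^sub>\<infinity>\<^sup>2 = \<theta>(q) (q\<^sup>2;q\<^sup>2)\<^sub>\<infinity>\<close>, with
  \<open>\<theta>(q) = \<Sum>\<^sub>t\<^sub>\<in>\<^sub>\<int> (-1)\<^sup>t q\<^bsup>t\<^sup>2\<^esup>\<close>, is obtained from the finite \<open>q\<close>-binomial theorem by letting the
  number of factors grow. Applied to \<open>q\<close> and \<open>q\<^sup>2\<close> it turns the two eta quotients into
  \<open>\<theta>(q)\<^sup>2\<theta>(q\<^sup>2)\<^sup>2\<close> and \<open>\<theta>(q)\<^sup>2\<theta>(q\<^sup>2)\<^sup>3\<close>. Hence \<open>C1(n)\<close> is a signed count of the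
  representations \<open>n = a\<^sup>2 + b\<^sup>2 + 2c\<^sup>2 + 2d\<^sup>2\<close>, or equivalently of \<open>n = a\<^sup>2 + b\<^sup>2 + u\<^sup>2 + v\<^sup>2\<close>
  with \<open>u \<equiv> v (mod 2)\<close>, weighted by \<open>(-1)\<^bsup>a+b+u\<^esup>\<close>. Squares are \<open>0\<close> or \<open>1\<close> modulo \<open>4\<close>,
  so the residue of \<open>n\<close> modulo \<open>4\<close> (and modulo \<open>8\<close> when \<open>4 | n\<close>) fixes the parities of
  \<open>a, b, u, v\<close> and hence the sign of every representation, except when \<open>n \<equiv> 2 (mod 4)\<close>, where
  exchanging \<open>(a, b)\<close> and \<open>(u, v)\<close> cancels them in pairs, and when \<open>n \<equiv> 4 (mod 8)\<close>, where the
  all-odd representations outnumber the all-even ones. Lagrange's four-square theorem guarantees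
  that representations exist.
  Finally \<open>C2 = C1 * \<theta>(q\<^sup>2)\<close>, and every nonzero term of this convolution has the sign predicted
  for \<open>C2(n)\<close>.
\<close>

section \<open>Gaussian binomial coefficients\<close>

definition qpoch :: "'a::comm_ring_1 \<Rightarrow> nat \<Rightarrow> 'a" where
  "qpoch x n = (\<Prod>i<n. 1 - x ^ Suc i)"

fun qbinomial :: "'a::comm_ring_1 \<Rightarrow> nat \<Rightarrow> nat \<Rightarrow> 'a" where
  "qbinomial x 0 j = (if j = 0 then 1 else 0)"
| "qbinomial x (Suc m) j = (if j = 0 then 1 else qbinomial x m (j - 1) + x ^ j * qbinomial x m j)"

lemma qbinomial_eq_0: "m < j \<Longrightarrow> qbinomial x m j = 0"
  by (induction m arbitrary: j) auto

lemma qbinomial_0_right [simp]: "qbinomial x m 0 = 1"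
  by (cases m) auto

lemma qpoch_0 [simp]: "qpoch x 0 = 1"
  by (simp add: qpoch_def)

lemma qpoch_Suc: "qpoch x (Suc n) = qpoch x n * (1 - x ^ Suc n)"
  by (simp add: qpoch_def)

lemma qbinomial_qpoch:
  "j \<le> m \<Longrightarrow> qbinomial x m j * qpoch x j * qpoch x (m - j) = qpoch x m"
proof (induction m arbitrary: j)
  case 0
  thus ?case by simp
next
  case (Suc m)
  show ?case
  proof (cases "j = 0")
    case False
    then obtain j' where j: "j = Suc j'" by (cases j) auto
    have "qbinomial x m j' * qpoch x j * qpoch x (Suc m - j)
        = (qbinomial x m j' * qpoch x j' * qpoch x (m - j')) * (1 - x^j)"
      unfolding j by (simp add: qpoch_Suc ac_simps)
    also have "\<dots> = qpoch x m * (1 - x^j)"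
      using Suc.IH[of j'] Suc.prems unfolding j by simp
    finally have shifted: "qbinomial x m j' * qpoch x j * qpoch x (Suc m - j) = qpoch x m * (1 - x^j)" .
    have unshifted: "x^j * qbinomial x m j * qpoch x j * qpoch x (Suc m - j) = qpoch x m * (x^j - x^(Suc m))"
    proof (cases "j = Suc m")
      case True
      thus ?thesis using qbinomial_eq_0[of m j x] by simp
    next
      case False
      hence jm: "j \<le> m" using Suc.prems by simp
      have "x^j * qbinomial x m j * qpoch x j * qpoch x (Suc m - j)
          = x^j * (qbinomial x m j * qpoch x j * qpoch x (m - j)) * (1 - x^(Suc (m - j)))"
        using jm by (simp add: Suc_diff_le qpoch_Suc ac_simps)
      also have "\<dots> = qpoch x m * (x^j - x^j * x^(Suc (m - j)))"
        unfolding Suc.IH[OF jm] by (simp add: algebra_simps)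
      also have "x^j * x^(Suc (m - j)) = x^(Suc m)"
        using jm by (simp only: power_add[symmetric]) simp
      finally show ?thesis .
    qed
    have "qbinomial x (Suc m) j * qpoch x j * qpoch x (Suc m - j)
        = qbinomial x m j' * qpoch x j * qpoch x (Suc m - j)
          + x^j * qbinomial x m j * qpoch x j * qpoch x (Suc m - j)"
      unfolding j by (simp add: algebra_simps)
    also have "\<dots> = qpoch x m * (1 - x^j) + qpoch x m * (x^j - x^(Suc m))"
      unfolding shifted unshifted ..
    also have "\<dots> = qpoch x (Suc m)"
      by (simp add: qpoch_Suc algebra_simps)
    finally show ?thesis .
  qed simp
qed

lemma prod_lessThan_double: "(\<Prod>i<2*n. f i) = (\<Prod>i<n. f (2*i) * f (2*i+1))"
  for n :: nat
  by (induction n) (simp_all add: mult.assoc)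

lemma qpoch_double: "qpoch y (2*n) = (\<Prod>i<n. 1 - y^(2*i+1)) * qpoch (y^2) n"
proof -
  have "(y^2)^(Suc i) = y^(Suc (2*i+1))" for i
    using power_mult[of y 2 "Suc i", symmetric] by simp
  thus ?thesis unfolding qpoch_def prod_lessThan_double prod.distrib by simp
qed

lemma neg_one_power_mult_self: "(-1::'a::comm_ring_1) ^ n * (-1) ^ n = 1"
  unfolding power_mult_distrib[symmetric] by simp

lemma Suc_choose_two: "Suc j choose 2 = (j choose 2) + j"
  by (simp add: numeral_2_eq_2)

lemma qbinomial_theorem:
  fixes x a b :: "'a::comm_ring_1"
  shows "(\<Prod>i<m. a - b * x^i) = (\<Sum>j\<le>m. qbinomial x m j * a^(m - j) * (-b)^j * x^(j choose 2))"
proof (induction m arbitrary: b)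
  case 0
  thus ?case by (simp add: numeral_2_eq_2)
next
  case (Suc m)
  define f where "f j = qbinomial x m j * a^(m - j) * (-(b*x))^j * x^(j choose 2)" for j
  define T where "T j = a^(Suc m - j) * (-b)^j * x^(j choose 2)" for j
  have neg: "(-(b*x))^j = (-b)^j * x^j" for j
    by (metis minus_mult_left power_mult_distrib)
  have "(\<Prod>i<Suc m. a - b * x^i) = (a - b) * (\<Prod>i<m. a - (b*x) * x^i)"
    by (subst prod.lessThan_Suc_shift) (simp add: mult.assoc)
  also have "\<dots> = a * (\<Sum>j\<le>m. f j) - b * (\<Sum>j\<le>m. f j)"
    unfolding Suc.IH f_def by (simp add: algebra_simps)
  also have "a * (\<Sum>j\<le>m. f j) = (\<Sum>j\<le>Suc m. x^j * qbinomial x m j * T j)"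
  proof -
    have "a * (\<Sum>j\<le>m. f j) = (\<Sum>j\<le>m. x^j * qbinomial x m j * T j)"
      unfolding sum_distrib_left f_def T_def neg
      by (intro sum.cong refl) (simp add: Suc_diff_le algebra_simps)
    thus ?thesis by (simp add: qbinomial_eq_0)
  qed
  also have "b * (\<Sum>j\<le>m. f j) = - (\<Sum>j\<le>m. qbinomial x m j * T (Suc j))"
    unfolding sum_distrib_left f_def T_def neg Suc_choose_two
    by (simp add: sum_negf[symmetric] power_add algebra_simps)
  also have "(\<Sum>j\<le>m. qbinomial x m j * T (Suc j))
      = (\<Sum>j\<le>Suc m. (if j = 0 then 0 else qbinomial x m (j - 1)) * T j)"
    by (subst sum.atMost_Suc_shift) simp
  also have "(\<Sum>j\<le>Suc m. x^j * qbinomial x m j * T j)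
      - - (\<Sum>j\<le>Suc m. (if j = 0 then 0 else qbinomial x m (j - 1)) * T j)
      = (\<Sum>j\<le>Suc m. qbinomial x (Suc m) j * T j)"
    unfolding diff_minus_eq_add minus_minus sum.distrib[symmetric]
    by (intro sum.cong refl) (simp add: algebra_simps)
  finally show ?case
    unfolding T_def by (simp only: mult.assoc)
qed

lemma prod_lessThan_add: "(\<Prod>i<m + n. f i) = (\<Prod>i<m. f i) * (\<Prod>i<n. f (m + i))"
  for m n :: nat
  by (induction n) (simp_all add: mult.assoc)

lemma prod_power_double: "(\<Prod>i<n. y^(2*i)) = (y::'a::comm_monoid_mult)^(n*(n-1))"
proof (induction n)
  case (Suc n)
  have "(\<Prod>i<Suc n. y^(2*i)) = y^(n*(n-1)) * y^(2*n)" using Suc.IH by simp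
  also have "\<dots> = y^(n*(n-1) + 2*n)" by (rule power_add[symmetric])
  also have "n*(n-1) + 2*n = Suc n * (Suc n - 1)" by (cases n) auto
  finally show ?case .
qed simp

lemma prod_power_diff_lower_half:
  fixes y :: "'a::comm_ring_1"
  assumes "n \<ge> 1"
  shows "(\<Prod>i<n. y^(2*n-1) - (y^2)^i) = (-1)^n * y^(n*(n-1)) * (\<Prod>i<n. 1 - y^(2*i+1))"
proof -
  have "(\<Prod>i<n. y^(2*n-1) - (y^2)^i) = (\<Prod>i<n. (-1) * y^(2*i) * (1 - y^(2*(n - Suc i)+1)))"
  proof (rule prod.cong)
    fix i assume "i \<in> {..<n}"
    hence "2*n-1 = 2*i + (2*(n - Suc i)+1)" by auto
    hence "y^(2*n-1) = y^(2*i) * y^(2*(n - Suc i)+1)" by (simp only: power_add)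
    moreover have "(y^2)^i = y^(2*i)" by (simp only: power_mult)
    moreover have "c = a * b \<Longrightarrow> c - a = (-1) * a * (1 - b)" for a b c :: 'a
      by (simp add: algebra_simps)
    ultimately show "y^(2*n-1) - (y^2)^i = (-1) * y^(2*i) * (1 - y^(2*(n - Suc i)+1))"
      by simp
  qed simp
  also have "\<dots> = (-1)^n * (\<Prod>i<n. y^(2*i)) * (\<Prod>i<n. 1 - y^(2*(n - Suc i)+1))"
    by (simp only: prod.distrib prod_constant card_lessThan)
  also have "(\<Prod>i<n. 1 - y^(2*(n - Suc i)+1)) = (\<Prod>i<n. 1 - y^(2*i+1))"
    by (rule prod.nat_diff_reindex[where g="\<lambda>i. 1 - y^(2*i+1)"])
  finally show ?thesis by (simp add: prod_power_double)
qed

lemma prod_power_diff_upper_half: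
  fixes y :: "'a::comm_ring_1"
  assumes "n \<ge> 1"
  shows "(\<Prod>i<n. y^(2*n-1) - (y^2)^(n+i)) = y^(n*(2*n-1)) * (\<Prod>i<n. 1 - y^(2*i+1))"
proof -
  have "(\<Prod>i<n. y^(2*n-1) - (y^2)^(n+i)) = (\<Prod>i<n. y^(2*n-1) * (1 - y^(2*i+1)))"
  proof (rule prod.cong)
    fix i
    have "2*(n+i) = (2*n-1) + (2*i+1)" using assms by auto
    hence "(y^2)^(n+i) = y^(2*n-1) * y^(2*i+1)" by (simp only: power_mult[symmetric] power_add[symmetric])
    thus "y^(2*n-1) - (y^2)^(n+i) = y^(2*n-1) * (1 - y^(2*i+1))"
      by (simp add: algebra_simps)
  qed simp
  thus ?thesis by (simp add: prod.distrib power_mult[symmetric] mult.commute)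
qed

lemma alternating_qbinomial_exponent:
  assumes "j \<le> 2*n" "n \<ge> 1"
  shows "(2*n-1)*(2*n-j) + 2*(j choose 2) = n*(n-1) + n*(2*n-1) + nat ((int j - int n)^2)"
proof -
  have "int (2*(j choose 2)) = int j * (int j - 1)"
    by (cases j) (auto simp: choose_two algebra_simps)
  moreover have "int ((2*n-1)*(2*n-j)) = (2*int n - 1) * (2*int n - int j)"
    using assms by (simp add: of_nat_diff)
  moreover have "int (n*(n-1) + n*(2*n-1)) = int n * (int n - 1) + int n * (2*int n - 1)"
    using assms by (simp add: of_nat_diff)
  moreover have "(2*int n - 1) * (2*int n - int j) + int j * (int j - 1)
      = int n * (int n - 1) + int n * (2*int n - 1) + (int j - int n)^2"
    by (simp add: power2_eq_square algebra_simps)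
  ultimately have "int ((2*n-1)*(2*n-j) + 2*(j choose 2))
      = int (n*(n-1) + n*(2*n-1) + nat ((int j - int n)^2))"
    by (simp only: of_nat_add int_nat_eq zero_le_power2 if_True)
  thus ?thesis by (simp only: of_nat_eq_iff)
qed

text \<open>A finite form of Gauss's identity, from the \<open>q\<close>-binomial theorem with
  \<open>x = y\<^sup>2\<close>, \<open>a = y\<^bsup>2n-1\<^esup>\<close>, \<open>b = 1\<close>, \<open>m = 2n\<close>.\<close>
lemma alternating_qbinomial_sum:
  fixes y :: "'a::idom"
  assumes y: "y \<noteq> 0"
  shows "(\<Sum>j\<le>2*n. (-1)^j * qbinomial (y^2) (2*n) j * y^(nat ((int j - int n)^2)))
    = (-1)^n * (\<Prod>i<n. 1 - y^(2*i+1))^2"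
proof (cases "n = 0")
  case False
  hence n: "n \<ge> 1" by simp
  define Q where "Q = (\<Prod>i<n. 1 - y^(2*i+1))"
  define S where "S = (\<Sum>j\<le>2*n. (-1)^j * qbinomial (y^2) (2*n) j * y^(nat ((int j - int n)^2)))"
  define E where "E = n*(n-1) + n*(2*n-1)"
  have "(\<Prod>i<2*n. y^(2*n-1) - (y^2)^i)
      = (\<Sum>j\<le>2*n. qbinomial (y^2) (2*n) j * (y^(2*n-1))^(2*n-j) * (-1)^j * (y^2)^(j choose 2))"
    using qbinomial_theorem[of "y^(2*n-1)" 1 "y^2" "2*n"] by simp
  also have "\<dots> = y^E * S"
    unfolding S_def sum_distrib_left
  proof (rule sum.cong)
    fix j assume "j \<in> {..2*n}"
    hence "(y^(2*n-1))^(2*n-j) * (y^2)^(j choose 2) = y^E * y^(nat ((int j - int n)^2))"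
      using alternating_qbinomial_exponent[of j n] n unfolding E_def
      by (simp add: power_mult[symmetric] power_add[symmetric])
    thus "qbinomial (y^2) (2*n) j * (y^(2*n-1))^(2*n-j) * (-1)^j * (y^2)^(j choose 2) =
          y^E * ((-1)^j * qbinomial (y^2) (2*n) j * y^(nat ((int j - int n)^2)))"
      by (simp add: algebra_simps)
  qed simp
  finally have "y^E * S = (\<Prod>i<n. y^(2*n-1) - (y^2)^i) * (\<Prod>i<n. y^(2*n-1) - (y^2)^(n+i))"
    using prod_lessThan_add[of "\<lambda>i. y^(2*n-1) - (y^2)^i" n n] by (simp add: mult_2)
  also have "\<dots> = (y^(n*(n-1)) * y^(n*(2*n-1))) * ((-1)^n * Q^2)"
    unfolding prod_power_diff_lower_half[OF n] prod_power_diff_upper_half[OF n] Q_def by (simp add: power2_eq_square ac_simps)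
  also have "y^(n*(n-1)) * y^(n*(2*n-1)) = y^E"
    unfolding E_def by (rule power_add[symmetric])
  finally show ?thesis
    using y unfolding S_def Q_def by simp
qed simp

section \<open>Gauss's identity for \<open>(q;q)\<^sub>\<infinity>\<^sup>2 / (q\<^sup>2;q\<^sup>2)\<^sub>\<infinity>\<close>\<close>

unbundle fps_syntax

definition fps_eq_below :: "nat \<Rightarrow> 'a fps \<Rightarrow> 'a fps \<Rightarrow> bool" where
  "fps_eq_below M f g \<longleftrightarrow> (\<forall>i<M. f $ i = g $ i)"

lemma fps_eq_below_refl [simp]: "fps_eq_below M f f"
  by (simp add: fps_eq_below_def)

lemma fps_eq_below_sym: "fps_eq_below M f g \<Longrightarrow> fps_eq_below M g f"
  by (simp add: fps_eq_below_def)

lemma fps_eq_below_trans [trans]: "fps_eq_below M f g \<Longrightarrow> fps_eq_below M g h \<Longrightarrow> fps_eq_below M f h"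
  by (simp add: fps_eq_below_def)

lemma fps_eq_below_eq_trans [trans]: "fps_eq_below M f g \<Longrightarrow> g = h \<Longrightarrow> fps_eq_below M f h"
  by simp

lemma eq_fps_eq_below_trans [trans]: "f = g \<Longrightarrow> fps_eq_below M g h \<Longrightarrow> fps_eq_below M f h"
  by simp

lemma fps_eq_below_mono: "fps_eq_below M f g \<Longrightarrow> M' \<le> M \<Longrightarrow> fps_eq_below M' f g"
  by (simp add: fps_eq_below_def)

lemma fps_eq_below_add:
  "fps_eq_below M f g \<Longrightarrow> fps_eq_below M f' g' \<Longrightarrow> fps_eq_below M (f + f') (g + g')"
  by (simp add: fps_eq_below_def)

lemma fps_eq_below_diff:
  "fps_eq_below M f g \<Longrightarrow> fps_eq_below M f' g' \<Longrightarrow> fps_eq_below M (f - f') (g - g')"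
  by (simp add: fps_eq_below_def)

lemma fps_eq_below_mult:
  fixes f g f' g' :: "'a::comm_semiring_0 fps"
  assumes "fps_eq_below M f g" "fps_eq_below M f' g'"
  shows "fps_eq_below M (f * f') (g * g')"
  unfolding fps_eq_below_def
proof (intro allI impI)
  fix i assume "i < M"
  thus "(f * f') $ i = (g * g') $ i"
    using assms unfolding fps_mult_nth fps_eq_below_def by (intro sum.cong) auto
qed

lemma fps_eq_below_power:
  fixes f g :: "'a::comm_semiring_1 fps"
  shows "fps_eq_below M f g \<Longrightarrow> fps_eq_below M (f ^ n) (g ^ n)"
  by (induction n) (auto intro: fps_eq_below_mult)

lemma fps_eq_below_sum:
  "(\<And>x. x \<in> A \<Longrightarrow> fps_eq_below M (f x) (g x)) \<Longrightarrow> fps_eq_below M (sum f A) (sum g A)"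
  by (induction A rule: infinite_finite_induct) (auto intro: fps_eq_below_add)

lemma fps_eq_below_imp_eq: "(\<And>M. fps_eq_below M f g) \<Longrightarrow> f = g"
  by (rule fps_ext) (meson fps_eq_below_def lessI)

lemma fps_eq_below_X_power_mult:
  "M \<le> n \<Longrightarrow> fps_eq_below M (fps_X ^ n * f) (0 :: 'a::comm_ring_1 fps)"
  by (simp add: fps_eq_below_def fps_X_power_mult_nth)

abbreviation qprod :: "nat \<Rightarrow> rat fps" where
  "qprod k \<equiv> qpoch_inf (fps_X ^ k) (fps_X ^ k)"

lemma qpoch_X_power_eq_below:
  assumes "k \<ge> 1" "n \<le> N"
  shows "fps_eq_below (Suc n) (qpoch (fps_X ^ k) n) (qpoch (fps_X ^ k :: 'a::comm_ring_1 fps) N)"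
  using assms(2)
proof (induction N rule: dec_induct)
  case (step m)
  have "Suc n \<le> k * Suc m"
    using assms(1) step(1) mult_le_mono1[of 1 k "Suc m"] by simp
  hence "fps_eq_below (Suc n) (qpoch (fps_X ^ k) m * (1 - fps_X ^ (k * Suc m))) (qpoch (fps_X ^ k) m * (1 - 0))"
    by (intro fps_eq_below_mult fps_eq_below_diff fps_eq_below_refl)
       (simp add: fps_eq_below_X_power_mult[of _ _ 1, simplified])
  hence "fps_eq_below (Suc n) (qpoch (fps_X ^ k) (Suc m)) (qpoch (fps_X ^ k) m)"
    by (simp only: qpoch_Suc power_mult diff_zero mult_1_right)
  with step(3) show ?case by (rule fps_eq_below_trans[OF _ fps_eq_below_sym])
qed simp

lemma qprod_eq_below:
  assumes "k \<ge> 1"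
  shows "fps_eq_below (Suc N) (qpoch (fps_X ^ k) N) (qprod k)"
proof -
  define L where "L = Abs_fps (\<lambda>n. qpoch (fps_X ^ k) n $ n :: rat)"
  have coeff: "qpoch (fps_X ^ k) N $ n = L $ n" if "n \<le> N" for n N
  proof -
    have "qpoch (fps_X ^ k) n $ n = qpoch (fps_X ^ k) N $ n"
      using qpoch_X_power_eq_below[OF assms that] unfolding fps_eq_below_def by blast
    thus ?thesis unfolding L_def fps_nth_Abs_fps by (rule sym)
  qed
  have lim: "qpoch (fps_X ^ k) \<longlonglongrightarrow> L"
  proof (rule tendsto_fpsI)
    fix n
    show "\<forall>\<^sub>F N in sequentially. qpoch (fps_X ^ k) N $ n = L $ n"
      unfolding eventually_sequentially using coeff by blast
  qed
  have "(\<lambda>N. \<Prod>j<N. 1 - fps_X ^ k * (fps_X ^ k) ^ j) = qpoch (fps_X ^ k)"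
    by (simp add: qpoch_def fun_eq_iff)
  hence "qprod k = lim (qpoch (fps_X ^ k))"
    unfolding qpoch_inf_def by (rule arg_cong)
  also have "\<dots> = L" using lim by (rule limI)
  finally show ?thesis using coeff by (simp add: fps_eq_below_def less_Suc_eq_le)
qed

lemma qprod_nth_0: "k \<ge> 1 \<Longrightarrow> qprod k $ 0 = 1"
  using qprod_eq_below[of k 0] by (simp add: fps_eq_below_def)

definition parity_sign :: "int \<Rightarrow> rat" where
  "parity_sign t = (if even t then 1 else -1)"

definition graded_gf :: "('b \<Rightarrow> nat) \<Rightarrow> ('b \<Rightarrow> 'a::comm_monoid_add) \<Rightarrow> 'a fps" where
  "graded_gf d w = Abs_fps (\<lambda>n. \<Sum>x\<in>{x. d x = n}. w x)"

lemma graded_gf_nth: "graded_gf d w $ n = (\<Sum>x\<in>{x. d x = n}. w x)"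
  by (simp add: graded_gf_def)

text \<open>\<open>theta k = \<Sum>\<^sub>t (-1)\<^sup>t q\<^bsup>k t\<^sup>2\<^esup>\<close>, summed over all integers \<open>t\<close>.\<close>
definition theta :: "nat \<Rightarrow> rat fps" where
  "theta k = graded_gf (\<lambda>t::int. k * nat (t^2)) parity_sign"

lemma theta_nth: "theta k $ n = (\<Sum>t\<in>{t::int. k * nat (t^2) = n}. parity_sign t)"
  by (simp add: theta_def graded_gf_nth)

lemma fps_neg_one_power_mult_nth: "((-1::'a::comm_ring_1 fps) ^ j * f) $ i = (-1) ^ j * f $ i"
  by (induction j arbitrary: f) (auto simp: mult.assoc)

lemma abs_le_square: "\<bar>t::int\<bar> \<le> t^2"
proof (cases "t = 0")
  case False
  hence "\<bar>t\<bar> * 1 \<le> \<bar>t\<bar> * \<bar>t\<bar>" by (intro mult_left_mono) auto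
  thus ?thesis by (simp add: power2_eq_square abs_mult_self_eq)
qed simp

lemma qbinomial_qprod_eq_below:
  assumes k: "k \<ge> 1" and j: "j \<le> m" "M \<le> Suc j" "M \<le> Suc (m - j)"
  shows "fps_eq_below M (qbinomial (fps_X ^ k) m j * qprod k) 1"
proof -
  let ?x = "fps_X ^ k :: rat fps"
  have approx: "fps_eq_below M (qpoch ?x i) (qprod k)" if "M \<le> Suc i" for i
    using qprod_eq_below[OF k, of i] that by (rule fps_eq_below_mono)
  have "fps_eq_below M (qbinomial ?x m j * qprod k * qprod k)
      (qbinomial ?x m j * qpoch ?x j * qpoch ?x (m - j))"
    using j by (intro fps_eq_below_mult fps_eq_below_refl fps_eq_below_sym[OF approx])
  also have "qbinomial ?x m j * qpoch ?x j * qpoch ?x (m - j) = qpoch ?x m"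
    using j(1) by (rule qbinomial_qpoch)
  also have "fps_eq_below M \<dots> (qprod k)"
    using j by (intro approx) simp
  finally have "fps_eq_below M (qbinomial ?x m j * qprod k * qprod k * inverse (qprod k))
      (qprod k * inverse (qprod k))"
    by (intro fps_eq_below_mult fps_eq_below_refl)
  moreover have "qprod k * inverse (qprod k) = 1"
    using qprod_nth_0[OF k] by (intro inverse_mult_eq_1') simp
  ultimately show ?thesis by (simp add: mult.assoc)
qed

lemma alternating_sum_eq_below_theta:
  assumes k: "k \<ge> 1" and M: "M \<le> n"
  shows "fps_eq_below M (\<Sum>j\<le>2*n. (-1)^j * fps_X ^ (k * nat ((int j - int n)^2))) ((-1)^n * theta k)"
  unfolding fps_eq_below_def
proof (intro allI impI)
  fix i assume i: "i < M"
  define D where "D j = nat ((int j - int n)^2)" for j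
  have "(\<Sum>j\<le>2*n. (-1)^j * fps_X ^ (k * D j)) $ i = (\<Sum>j\<le>2*n. (-1)^j * (if k * D j = i then 1 else 0 :: rat))"
    unfolding fps_sum_nth by (intro sum.cong refl) (simp add: fps_neg_one_power_mult_nth)
  also have "\<dots> = (\<Sum>j\<in>{j\<in>{..2*n}. k * D j = i}. (-1)^j)"
    by (subst sum.inter_filter) (auto intro!: sum.cong)
  also have "\<dots> = (\<Sum>t\<in>{t::int. k * nat (t^2) = i}. (-1)^n * parity_sign t)"
  proof (rule sum.reindex_bij_witness[where i="\<lambda>t. nat (t + int n)" and j="\<lambda>j. int j - int n"])
    fix t :: int assume t: "t \<in> {t. k * nat (t^2) = i}"
    have "\<bar>t\<bar> \<le> int (k * nat (t^2))"
      using abs_le_square[of t] mult_le_mono1[of 1 k "nat (t^2)"] k by linarith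
    moreover have "k * nat (t^2) = i" using t by simp
    ultimately have t_n: "\<bar>t\<bar> < int n" using i M by linarith
    thus "int (nat (t + int n)) - int n = t" by simp
    have "D (nat (t + int n)) = nat (t^2)" unfolding D_def using t_n by simp
    moreover have "nat (t + int n) \<le> 2*n" using t_n by linarith
    ultimately show "nat (t + int n) \<in> {j \<in> {..2*n}. k * D j = i}" using t by simp
  next
    fix j assume j: "j \<in> {j \<in> {..2*n}. k * D j = i}"
    thus "nat (int j - int n + int n) = j" by simp
    show "int j - int n \<in> {t. k * nat (t^2) = i}" using j unfolding D_def by simp
    show "(-1)^n * parity_sign (int j - int n) = (-1::rat)^j"
      unfolding minus_one_power_iff parity_sign_def by auto
  qed
  also have "\<dots> = ((-1)^n * theta k) $ i"
    by (simp add: fps_neg_one_power_mult_nth theta_nth sum_distrib_left)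
  finally show "(\<Sum>j\<le>2*n. (-1)^j * fps_X ^ (k * nat ((int j - int n)^2))) $ i = ((-1)^n * theta k) $ i"
    unfolding D_def .
qed

text \<open>Terms with \<open>(j - n)\<^sup>2 \<ge> M\<close> vanish below \<open>q\<^sup>M\<close>; for the others both \<open>j\<close> and
  \<open>2n - j\<close> are at least \<open>M\<close>, so that the Gaussian binomial coefficient is \<open>1/(q\<^bsup>2k\<^esup>;q\<^bsup>2k\<^esup>)\<^sub>\<infinity>\<close> below \<open>q\<^sup>M\<close>.\<close>
lemma qbinomial_term_eq_below:
  assumes k: "k \<ge> 1" and n: "2 * M \<le> n" and j: "j \<le> 2*n"
  defines "d \<equiv> nat ((int j - int n)^2)"
  shows "fps_eq_below M (qbinomial (fps_X ^ (2*k)) (2*n) j * fps_X ^ (k * d) * qprod (2*k))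
    (fps_X ^ (k * d))"
proof (cases "M \<le> k * d")
  case True
  have "fps_eq_below M (qbinomial (fps_X ^ (2*k)) (2*n) j * fps_X ^ (k * d) * qprod (2*k)) 0"
    using fps_eq_below_X_power_mult[OF True, of "qbinomial (fps_X ^ (2*k)) (2*n) j * qprod (2*k)"]
    by (simp only: ac_simps)
  moreover have "fps_eq_below M (fps_X ^ (k * d)) (0 :: rat fps)"
    using fps_eq_below_X_power_mult[OF True, of 1] by simp
  ultimately show ?thesis by (rule fps_eq_below_trans[OF _ fps_eq_below_sym])
next
  case False
  hence "d < M" using mult_le_mono1[of 1 k d] k by linarith
  hence "\<bar>int j - int n\<bar> < int M"
    using abs_le_square[of "int j - int n"] unfolding d_def by linarith
  hence "M \<le> Suc j" "M \<le> Suc (2*n - j)" using n j by linarith+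
  hence "fps_eq_below M (qbinomial (fps_X ^ (2*k)) (2*n) j * qprod (2*k)) 1"
    using k j by (intro qbinomial_qprod_eq_below) simp_all
  hence "fps_eq_below M (fps_X ^ (k * d) * (qbinomial (fps_X ^ (2*k)) (2*n) j * qprod (2*k)))
      (fps_X ^ (k * d) * 1)"
    by (intro fps_eq_below_mult fps_eq_below_refl)
  thus ?thesis by (simp only: ac_simps mult_1_left mult_1_right)
qed

lemma qbinomial_sum_eq_below_theta:
  assumes k: "k \<ge> 1" and n: "2 * M \<le> n"
  shows "fps_eq_below M
    ((\<Sum>j\<le>2*n. (-1)^j * qbinomial (fps_X ^ (2*k)) (2*n) j * fps_X ^ (k * nat ((int j - int n)^2)))
      * qprod (2*k))
    ((-1)^n * theta k)"
proof -
  let ?d = "\<lambda>j. nat ((int j - int n)^2)"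
  have "(\<Sum>j\<le>2*n. (-1)^j * qbinomial (fps_X ^ (2*k)) (2*n) j * fps_X ^ (k * ?d j)) * qprod (2*k)
      = (\<Sum>j\<le>2*n. (-1)^j * (qbinomial (fps_X ^ (2*k)) (2*n) j * fps_X ^ (k * ?d j) * qprod (2*k)))"
    unfolding sum_distrib_right by (intro sum.cong refl) (simp only: mult.assoc)
  also have "fps_eq_below M \<dots> (\<Sum>j\<le>2*n. (-1)^j * fps_X ^ (k * ?d j))"
  proof (rule fps_eq_below_sum)
    fix j assume "j \<in> {..2*n}"
    hence "fps_eq_below M (qbinomial (fps_X ^ (2*k)) (2*n) j * fps_X ^ (k * ?d j) * qprod (2*k))
        (fps_X ^ (k * ?d j))"
      using k n by (intro qbinomial_term_eq_below) simp_all
    thus "fps_eq_below M ((-1)^j * (qbinomial (fps_X ^ (2*k)) (2*n) j * fps_X ^ (k * ?d j) * qprod (2*k)))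
        ((-1)^j * fps_X ^ (k * ?d j))"
      by (intro fps_eq_below_mult fps_eq_below_refl)
  qed
  also have "fps_eq_below M \<dots> ((-1)^n * theta k)"
    using k n by (intro alternating_sum_eq_below_theta) simp_all
  finally show ?thesis .
qed

text \<open>Below \<open>q\<^sup>M\<close>, the finite identity for \<open>n = 2M\<close> already agrees with the infinite one.\<close>
theorem qprod_square:
  assumes k: "k \<ge> 1"
  shows "qprod k ^ 2 = theta k * qprod (2*k)"
proof (rule fps_eq_below_imp_eq)
  fix M :: nat
  define n where "n = 2 * M"
  let ?y = "fps_X ^ k :: rat fps"
  define Q where "Q = (\<Prod>i<n. 1 - ?y^(2*i+1))"
  define S where "S = (\<Sum>j\<le>2*n. (-1::rat fps)^j * qbinomial (fps_X ^ (2*k)) (2*n) j * fps_X ^ (k * nat ((int j - int n)^2)))"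
  have y2: "?y^2 = fps_X ^ (2*k)"
    by (simp only: power_mult[symmetric] mult.commute)
  have "(\<Sum>j\<le>2*n. (-1)^j * qbinomial (?y^2) (2*n) j * ?y^(nat ((int j - int n)^2))) = S"
    unfolding S_def y2 by (simp only: power_mult)
  moreover have "?y \<noteq> 0" by simp
  ultimately have "S = (-1)^n * Q^2"
    using alternating_qbinomial_sum[of ?y n] unfolding Q_def by simp
  hence Q2: "Q^2 = (-1)^n * S"
    by (simp add: mult.assoc[symmetric] neg_one_power_mult_self)
  have approx1: "fps_eq_below M (qpoch ?y (2*n)) (qprod k)"
    using qprod_eq_below[OF k, of "2*n"] by (rule fps_eq_below_mono) (simp add: n_def)
  have approx2: "fps_eq_below M (qpoch (fps_X ^ (2*k)) n) (qprod (2*k))"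
    using qprod_eq_below[of "2*k" n] k by (auto simp: n_def intro: fps_eq_below_mono)
  have approx3: "fps_eq_below M (S * qprod (2*k)) ((-1)^n * theta k)"
    unfolding S_def using k by (intro qbinomial_sum_eq_below_theta) (simp_all add: n_def)
  have "fps_eq_below M (qprod k ^ 2) (qpoch ?y (2*n) ^ 2)"
    by (rule fps_eq_below_power[OF fps_eq_below_sym[OF approx1]])
  also have "qpoch ?y (2*n) ^ 2 = (-1)^n * S * qpoch (fps_X ^ (2*k)) n ^ 2"
    unfolding qpoch_double y2 power_mult_distrib Q_def[symmetric] Q2 ..
  also have "fps_eq_below M \<dots> ((-1)^n * S * qprod (2*k) ^ 2)"
    by (rule fps_eq_below_mult[OF fps_eq_below_refl fps_eq_below_power[OF approx2]])
  also have "\<dots> = (-1)^n * (S * qprod (2*k)) * qprod (2*k)"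
    by (simp only: power2_eq_square mult.assoc)
  also have "fps_eq_below M \<dots> ((-1)^n * ((-1)^n * theta k) * qprod (2*k))"
    by (rule fps_eq_below_mult[OF fps_eq_below_mult[OF fps_eq_below_refl approx3] fps_eq_below_refl])
  also have "\<dots> = theta k * qprod (2*k)"
    by (simp add: mult.assoc[symmetric] neg_one_power_mult_self)
  finally show "fps_eq_below M (qprod k ^ 2) (theta k * qprod (2*k))" .
qed

section \<open>The eta quotients as theta products\<close>

lemma fps_mult_power_divide_cancel:
  fixes f g :: "'a::field fps"
  assumes "g $ 0 \<noteq> 0"
  shows "f * g ^ m / g ^ m = f"
proof -
  have "(g ^ m) $ 0 \<noteq> 0" using assms by (simp add: fps_nth_power_0)
  thus ?thesis by (simp add: fps_divide_unit mult.assoc inverse_mult_eq_1')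
qed

lemma qprod_eta_quotient:
  "qprod 1 ^ 4 * qprod 2 ^ 2 = theta 1 ^ 2 * theta 2 ^ 2 * qprod 4 ^ 2"
proof -
  have "qprod 1 ^ 4 * qprod 2 ^ 2 = (qprod 1 ^ 2) ^ 2 * qprod 2 ^ 2"
    by (simp flip: power_mult)
  also have "\<dots> = theta 1 ^ 2 * (qprod 2 ^ 2) ^ 2"
    using qprod_square[of 1] by (simp add: power_mult_distrib power2_eq_square ac_simps)
  also have "\<dots> = theta 1 ^ 2 * theta 2 ^ 2 * qprod 4 ^ 2"
    using qprod_square[of 2] by (simp add: power_mult_distrib ac_simps)
  finally show ?thesis .
qed

lemma C1_fps_eq: "qprod 1 ^ 4 * qprod 2 ^ 2 / qprod 4 ^ 2 = theta 1 ^ 2 * theta 2 ^ 2"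
  unfolding qprod_eta_quotient by (rule fps_mult_power_divide_cancel) (simp add: qprod_nth_0)

lemma C2_fps_eq: "qprod 1 ^ 4 * qprod 2 ^ 4 / qprod 4 ^ 3 = theta 1 ^ 2 * theta 2 ^ 3"
proof -
  have "qprod 1 ^ 4 * qprod 2 ^ 4 = (qprod 1 ^ 4 * qprod 2 ^ 2) * qprod 2 ^ 2"
    by (simp add: power_add[symmetric] mult.assoc)
  also have "\<dots> = theta 1 ^ 2 * theta 2 ^ 3 * qprod 4 ^ 3"
    unfolding qprod_eta_quotient unfolding qprod_square[of 2, simplified]
    by (simp only: power2_eq_square power3_eq_cube ac_simps)
  finally show ?thesis
    by (simp only:) (rule fps_mult_power_divide_cancel, simp add: qprod_nth_0)
qed

lemma graded_gf_fiber_product: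
  fixes d :: "'a \<Rightarrow> nat" and d' :: "'b \<Rightarrow> nat"
  shows "{p. (case p of (x, y) \<Rightarrow> d x + d' y) = n} = (\<Union>i\<in>{0..n}. {x. d x = i} \<times> {y. d' y = n - i})"
  by auto

lemma finite_graded_gf_fiber_product:
  fixes d :: "'a \<Rightarrow> nat" and d' :: "'b \<Rightarrow> nat"
  assumes "\<And>n. finite {x. d x = n}" "\<And>n. finite {y. d' y = n}"
  shows "finite {p. (case p of (x, y) \<Rightarrow> d x + d' y) = n}"
  unfolding graded_gf_fiber_product using assms by auto

lemma graded_gf_mult:
  fixes d :: "'b \<Rightarrow> nat" and d' :: "'c \<Rightarrow> nat"
    and w :: "'b \<Rightarrow> 'a::comm_semiring_1" and w' :: "'c \<Rightarrow> 'a"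
  assumes fin: "\<And>n. finite {x. d x = n}" and fin': "\<And>n. finite {y. d' y = n}"
  shows "graded_gf d w * graded_gf d' w' = graded_gf (\<lambda>(x, y). d x + d' y) (\<lambda>(x, y). w x * w' y)"
proof (rule fps_ext)
  fix n
  have "(graded_gf d w * graded_gf d' w') $ n
      = (\<Sum>i=0..n. (\<Sum>x\<in>{x. d x = i}. w x) * (\<Sum>y\<in>{y. d' y = n - i}. w' y))"
    unfolding fps_mult_nth graded_gf_nth ..
  also have "\<dots> = (\<Sum>i=0..n. \<Sum>p\<in>{x. d x = i} \<times> {y. d' y = n - i}. (\<lambda>(x, y). w x * w' y) p)"
    by (intro sum.cong refl) (simp add: sum_product sum.cartesian_product)
  also have "\<dots> = (\<Sum>p\<in>(\<Union>i\<in>{0..n}. {x. d x = i} \<times> {y. d' y = n - i}). (\<lambda>(x, y). w x * w' y) p)"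
    by (rule sum.UNION_disjoint[symmetric]) (use fin fin' in auto)
  also have "\<dots> = graded_gf (\<lambda>(x, y). d x + d' y) (\<lambda>(x, y). w x * w' y) $ n"
    unfolding graded_gf_nth graded_gf_fiber_product[symmetric] ..
  finally show "(graded_gf d w * graded_gf d' w') $ n = \<dots>" .
qed

lemma finite_theta_fiber:
  assumes "k \<ge> 1"
  shows "finite {t::int. k * nat (t^2) = n}"
proof (rule finite_subset)
  show "{t::int. k * nat (t^2) = n} \<subseteq> {-int n..int n}"
  proof
    fix t :: int assume "t \<in> {t. k * nat (t^2) = n}"
    hence "t^2 \<le> int n" using mult_le_mono1[of 1 k "nat (t^2)"] assms by auto
    thus "t \<in> {-int n..int n}" using abs_le_square[of t] by auto
  qed
qed simp

definition form1122 :: "((int \<times> int) \<times> int) \<times> int \<Rightarrow> nat" where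
  "form1122 = (\<lambda>(((a, b), c), d). nat (a^2) + nat (b^2) + 2 * nat (c^2) + 2 * nat (d^2))"

definition sign1122 :: "((int \<times> int) \<times> int) \<times> int \<Rightarrow> rat" where
  "sign1122 = (\<lambda>(((a, b), c), d). parity_sign a * parity_sign b * parity_sign c * parity_sign d)"

lemma theta_product: "theta 1 ^ 2 * theta 2 ^ 2 = graded_gf form1122 sign1122"
proof -
  have fin1: "\<And>n. finite {t::int. 1 * nat (t^2) = n}" and fin2: "\<And>n. finite {t::int. 2 * nat (t^2) = n}"
    by (rule finite_theta_fiber; simp)+
  have fin11: "finite {p. (\<lambda>(x, y). 1 * nat (x^2) + 1 * nat ((y::int)^2)) p = n}" for n
    using finite_graded_gf_fiber_product[OF fin1 fin1] by simp
  have fin112: "finite {q. (\<lambda>(p, z). (\<lambda>(x, y). 1 * nat (x^2) + 1 * nat (y^2)) p + 2 * nat ((z::int)^2)) q = n}" for n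
    using finite_graded_gf_fiber_product[OF fin11 fin2] by simp
  have "theta 1 ^ 2 * theta 2 ^ 2 = ((theta 1 * theta 1) * theta 2) * theta 2"
    by (simp add: power2_eq_square ac_simps)
  also have "\<dots> = graded_gf
      (\<lambda>(q, z). (\<lambda>(p, z). (\<lambda>(x, y). 1 * nat (x^2) + 1 * nat (y^2)) p + 2 * nat (z^2)) q + 2 * nat (z^2))
      (\<lambda>(q, z). (\<lambda>(p, z). (\<lambda>(x, y). parity_sign x * parity_sign y) p * parity_sign z) q * parity_sign z)"
    unfolding theta_def graded_gf_mult[OF fin1 fin1] graded_gf_mult[OF fin11 fin2] graded_gf_mult[OF fin112 fin2] ..
  also have "\<dots> = graded_gf form1122 sign1122"
  proof -
    have "(\<lambda>(q, z). (\<lambda>(p, z). (\<lambda>(x, y). 1 * nat (x^2) + 1 * nat (y^2)) p + 2 * nat (z^2)) q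
        + 2 * nat ((z::int)^2)) = form1122"
      unfolding form1122_def by (auto simp: fun_eq_iff)
    moreover have "(\<lambda>(q, z). (\<lambda>(p, z). (\<lambda>(x, y). parity_sign x * parity_sign y) p * parity_sign z) q
        * parity_sign z) = sign1122"
      unfolding sign1122_def by (auto simp: fun_eq_iff)
    ultimately show ?thesis by simp
  qed
  finally show ?thesis .
qed

section \<open>Lagrange's four-square theorem\<close>

definition sum_of_four_squares :: "int \<Rightarrow> bool" where
  "sum_of_four_squares n \<longleftrightarrow> (\<exists>a b c d. n = a^2 + b^2 + c^2 + d^2)"

lemma euler_four_square_identity:
  fixes a b c d w x y z :: int
  shows "(a^2+b^2+c^2+d^2)*(w^2+x^2+y^2+z^2) =
    (a*w+b*x+c*y+d*z)^2 + (a*x-b*w+c*z-d*y)^2 + (a*y-b*z-c*w+d*x)^2 + (a*z+b*y-c*x-d*w)^2"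
  by algebra

lemma sum_of_four_squares_mult:
  "sum_of_four_squares m \<Longrightarrow> sum_of_four_squares n \<Longrightarrow> sum_of_four_squares (m * n)"
  unfolding sum_of_four_squares_def using euler_four_square_identity by metis

lemma sum_of_four_squares_0: "sum_of_four_squares 0"
  unfolding sum_of_four_squares_def by (rule exI[of _ 0])+ simp

lemma sum_of_four_squares_1: "sum_of_four_squares 1"
  unfolding sum_of_four_squares_def by (rule exI[of _ 1], (rule exI[of _ 0])+) simp

lemma sum_of_four_squares_2: "sum_of_four_squares 2"
  unfolding sum_of_four_squares_def by (rule exI[of _ 1], rule exI[of _ 1], (rule exI[of _ 0])+) simp

lemma dvd_abs_less_imp_eq_0:
  fixes p t :: int
  assumes "p dvd t" "\<bar>t\<bar> < p"
  shows "t = 0"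
  using assms dvd_imp_le_int by force

lemma inj_on_square_mod_prime:
  fixes p :: int
  assumes p: "prime p" and h: "2 * h < p" and s: "s = 1 \<or> s = -1"
  shows "inj_on (\<lambda>x. (c + s * x^2) mod p) {0..h}"
proof (rule inj_onI)
  fix x y
  assume x: "x \<in> {0..h}" and y: "y \<in> {0..h}" and eq: "(c + s * x^2) mod p = (c + s * y^2) mod p"
  have "p dvd s * ((x - y) * (x + y))"
    using eq by (simp add: mod_eq_dvd_iff algebra_simps power2_eq_square)
  hence "p dvd (x - y) * (x + y)" using s by auto
  hence "p dvd x - y \<or> p dvd x + y" using p prime_dvd_mult_iff by blast
  thus "x = y"
  proof
    assume "p dvd x - y"
    with x y h show ?thesis using dvd_abs_less_imp_eq_0 by fastforce
  next
    assume "p dvd x + y"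
    with x y h have "x + y = 0" by (intro dvd_abs_less_imp_eq_0) auto
    with x y show ?thesis by simp
  qed
qed

text \<open>Pigeonhole: the \<open>(p+1)/2\<close> residues of \<open>x\<^sup>2\<close> and the \<open>(p+1)/2\<close> residues
  of \<open>-1 - y\<^sup>2\<close> (\<open>0 \<le> x, y \<le> (p-1)/2\<close>) cannot all be distinct modulo \<open>p\<close>.\<close>
lemma odd_prime_dvd_sum_two_squares_plus_1:
  fixes p :: int
  assumes p: "prime p" and odd: "odd p"
  shows "\<exists>x y. 0 \<le> x \<and> 2*x < p \<and> 0 \<le> y \<and> 2*y < p \<and> p dvd x^2 + y^2 + 1"
proof -
  define h where "h = (p - 1) div 2"
  have p2: "p \<ge> 2" using p prime_ge_2_int by blast
  have hp: "2*h + 1 = p" using odd unfolding h_def by (auto elim!: oddE)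
  define A where "A = (\<lambda>x. (0 + 1 * x^2) mod p) ` {0..h}"
  define B where "B = (\<lambda>y. (-1 + (-1) * y^2) mod p) ` {0..h}"
  have card_A: "card A = nat (h + 1)" unfolding A_def
    by (subst card_image) (use inj_on_square_mod_prime[OF p, of h 1 0] hp in auto)
  have card_B: "card B = nat (h + 1)" unfolding B_def
    by (subst card_image) (use inj_on_square_mod_prime[OF p, of h "-1" "-1"] hp in auto)
  have "A \<union> B \<subseteq> {0..<p}"
    unfolding A_def B_def using p2 by auto
  hence "card (A \<union> B) \<le> card {0..<p}" by (intro card_mono) auto
  moreover have "finite A" "finite B" unfolding A_def B_def by auto
  ultimately have "A \<inter> B \<noteq> {}"
    using card_Un_disjoint[of A B] card_A card_B hp p2 by fastforce
  then obtain x y where x: "x \<in> {0..h}" and y: "y \<in> {0..h}"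
    and "(0 + 1 * x^2) mod p = (-1 + (-1) * y^2) mod p"
    unfolding A_def B_def by blast
  hence "p dvd x^2 - (-1 - y^2)" by (simp add: mod_eq_dvd_iff)
  hence "p dvd x^2 + y^2 + 1" by (simp add: algebra_simps)
  thus ?thesis using x y hp by (intro exI[of _ x] exI[of _ y]) auto
qed

definition centered_mod :: "int \<Rightarrow> int \<Rightarrow> int" where
  "centered_mod x m = (x + m div 2) mod m - m div 2"

lemma dvd_diff_centered_mod: "m dvd x - centered_mod x m"
proof -
  have "x - centered_mod x m = (x + m div 2) - (x + m div 2) mod m"
    unfolding centered_mod_def by simp
  also have "\<dots> = m * ((x + m div 2) div m)" by (rule minus_mod_eq_mult_div)
  finally show ?thesis by simp
qed

lemma centered_mod_square_le:
  fixes m x :: int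
  assumes "m > 0"
  shows "4 * (centered_mod x m)^2 \<le> m^2"
proof -
  define a h where "a = (x + m div 2) mod m" and "h = m div 2"
  have "0 \<le> a" "a < m" unfolding a_def using assms by simp_all
  moreover have "m - 1 \<le> 2 * h" "2 * h \<le> m" unfolding h_def by linarith+
  moreover have "centered_mod x m = a - h" unfolding centered_mod_def a_def h_def ..
  ultimately have "\<bar>2 * centered_mod x m\<bar> \<le> m" by linarith
  hence "\<bar>2 * centered_mod x m\<bar>^2 \<le> m^2" by (intro power_mono) auto
  thus ?thesis by (simp add: power_mult_distrib)
qed

lemma square_dvd_diff_squares:
  fixes m x y :: int
  assumes "m dvd x - y" and "y = 0 \<or> 4 * y^2 = m^2"
  shows "m^2 dvd x^2 - y^2"
proof -
  obtain t where x: "x = y + m * t" using assms(1) by (metis add.commute diff_add_cancel dvdE)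
  have diff: "x^2 - y^2 = (2 * y) * m * t + m^2 * t^2"
    unfolding x by (simp add: algebra_simps power2_eq_square)
  have "(2 * y)^2 = m^2 \<Longrightarrow> 2 * y = m \<or> 2 * y = -m"
    using power2_eq_iff by blast
  hence "2 * y = 0 \<or> 2 * y = m \<or> 2 * y = -m"
    using assms(2) by (auto simp: power_mult_distrib)
  thus ?thesis
    unfolding diff by (elim disjE) (simp_all add: power2_eq_square)
qed

lemma dvd_diff_squares:
  fixes m x y :: int
  assumes "m dvd x - y"
  shows "m dvd x^2 - y^2"
proof -
  have "x^2 - y^2 = (x - y) * (x + y)" by (simp add: algebra_simps power2_eq_square)
  thus ?thesis using assms by simp
qed

text \<open>Each \<open>z\<^sub>i\<close> of Euler's identity for \<open>(\<Sum>x\<^sub>i\<^sup>2)(\<Sum>y\<^sub>i\<^sup>2)\<close> is divisible by \<open>m\<close>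
  when \<open>x\<^sub>i \<equiv> y\<^sub>i\<close> and \<open>\<Sum>x\<^sub>i\<^sup>2 \<equiv> 0 (mod m)\<close>; dividing by \<open>m\<^sup>2\<close> gives \<open>r p\<close>.\<close>
lemma four_squares_descent_step:
  fixes m p r x1 x2 x3 x4 y1 y2 y3 y4 :: int
  assumes m: "m \<noteq> 0"
    and x: "m * p = x1^2 + x2^2 + x3^2 + x4^2" and y: "y1^2 + y2^2 + y3^2 + y4^2 = m * r"
    and "m dvd x1 - y1" "m dvd x2 - y2" "m dvd x3 - y3" "m dvd x4 - y4"
  shows "sum_of_four_squares (r * p)"
proof -
  obtain t1 t2 t3 t4 where t: "y1 = x1 - m*t1" "y2 = x2 - m*t2" "y3 = x3 - m*t3" "y4 = x4 - m*t4"
    using assms(4-7) unfolding dvd_def by (metis add_diff_cancel_left' diff_add_cancel)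
  define w1 where "w1 = p - (x1*t1 + x2*t2 + x3*t3 + x4*t4)"
  define w2 where "w2 = x2*t1 - x1*t2 + x4*t3 - x3*t4"
  define w3 where "w3 = x3*t1 - x1*t3 + x2*t4 - x4*t2"
  define w4 where "w4 = x4*t1 - x1*t4 + x3*t2 - x2*t3"
  have z: "x1*y1 + x2*y2 + x3*y3 + x4*y4 = m * w1" "x1*y2 - x2*y1 + x3*y4 - x4*y3 = m * w2"
    "x1*y3 - x2*y4 - x3*y1 + x4*y2 = m * w3" "x1*y4 + x2*y3 - x3*y2 - x4*y1 = m * w4"
    unfolding w1_def w2_def w3_def w4_def t using x by (simp_all add: algebra_simps power2_eq_square)
  have "(m * m) * (r * p) = (m * p) * (y1^2 + y2^2 + y3^2 + y4^2)"
    unfolding y by (simp add: ac_simps)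
  also have "\<dots> = (m * m) * (w1^2 + w2^2 + w3^2 + w4^2)"
    unfolding x euler_four_square_identity z by (simp add: algebra_simps power2_eq_square)
  finally have "r * p = w1^2 + w2^2 + w3^2 + w4^2" using m by simp
  thus ?thesis unfolding sum_of_four_squares_def by blast
qed

text \<open>If \<open>\<Sum>y\<^sub>i\<^sup>2\<close> is \<open>0\<close> or \<open>m\<^sup>2\<close>, every \<open>y\<^sub>i\<close> is \<open>0\<close> or \<open>\<plusminus>m/2\<close>, and then even \<open>m\<^sup>2\<close> divides \<open>\<Sum>x\<^sub>i\<^sup>2\<close>.\<close>
lemma four_squares_descent_degenerate:
  fixes m p r x1 x2 x3 x4 y1 y2 y3 y4 :: int
  assumes m: "m \<noteq> 0" and r: "r = 0 \<or> r = m"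
    and x: "m * p = x1^2 + x2^2 + x3^2 + x4^2" and y: "y1^2 + y2^2 + y3^2 + y4^2 = m * r"
    and dvd: "m dvd x1 - y1" "m dvd x2 - y2" "m dvd x3 - y3" "m dvd x4 - y4"
    and bound: "4*y1^2 \<le> m^2" "4*y2^2 \<le> m^2" "4*y3^2 \<le> m^2" "4*y4^2 \<le> m^2"
  shows "m dvd p"
proof -
  have half: "y1 = 0 \<or> 4 * y1^2 = m^2" "y2 = 0 \<or> 4 * y2^2 = m^2"
    "y3 = 0 \<or> 4 * y3^2 = m^2" "y4 = 0 \<or> 4 * y4^2 = m^2"
    using r y bound by (auto simp: power2_eq_square sum_power2_eq_zero_iff add_nonneg_eq_0_iff)
  have split: "m * p = ((x1^2 - y1^2) + (x2^2 - y2^2) + (x3^2 - y3^2) + (x4^2 - y4^2))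
      + (y1^2 + y2^2 + y3^2 + y4^2)"
    unfolding x by simp
  have "m^2 dvd (x1^2 - y1^2) + (x2^2 - y2^2) + (x3^2 - y3^2) + (x4^2 - y4^2)"
    using dvd half by (intro dvd_add square_dvd_diff_squares)
  moreover have "m^2 dvd y1^2 + y2^2 + y3^2 + y4^2"
    using r y by (auto simp: power2_eq_square)
  ultimately have "m * m dvd m * p"
    unfolding split power2_eq_square[of m] by (rule dvd_add)
  thus ?thesis using m by simp
qed

lemma four_squares_descent:
  fixes m p x1 x2 x3 x4 :: int
  assumes p: "prime p" and m: "1 < m" "m < p"
    and x: "m * p = x1^2 + x2^2 + x3^2 + x4^2"
  shows "\<exists>r. 0 < r \<and> r < m \<and> sum_of_four_squares (r * p)"
proof -
  have not_dvd: "\<not> m dvd p"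
  proof
    assume "m dvd p"
    moreover have "m > 0" using m by simp
    ultimately have "m = 1 \<or> m = p" using p unfolding prime_int_iff by auto
    thus False using m by auto
  qed
  define y1 y2 y3 y4 where "y1 = centered_mod x1 m" and "y2 = centered_mod x2 m"
    and "y3 = centered_mod x3 m" and "y4 = centered_mod x4 m"
  note defs = y1_def y2_def y3_def y4_def
  have dvd: "m dvd x1 - y1" "m dvd x2 - y2" "m dvd x3 - y3" "m dvd x4 - y4"
    unfolding defs by (rule dvd_diff_centered_mod)+
  have bound: "4*y1^2 \<le> m^2" "4*y2^2 \<le> m^2" "4*y3^2 \<le> m^2" "4*y4^2 \<le> m^2"
    unfolding defs using m by (intro centered_mod_square_le; simp)+
  have "m dvd (x1^2 - y1^2) + (x2^2 - y2^2) + (x3^2 - y3^2) + (x4^2 - y4^2)"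
    using dvd by (intro dvd_add dvd_diff_squares)
  moreover have "m * p = ((x1^2 - y1^2) + (x2^2 - y2^2) + (x3^2 - y3^2) + (x4^2 - y4^2))
      + (y1^2 + y2^2 + y3^2 + y4^2)"
    unfolding x by simp
  ultimately have "m dvd y1^2 + y2^2 + y3^2 + y4^2"
    by (metis dvd_add_right_iff dvd_triv_left)
  then obtain r where r: "y1^2 + y2^2 + y3^2 + y4^2 = m * r" by blast
  have "0 \<le> m * r" "4 * (m * r) \<le> 4 * (m * m)"
    using bound unfolding r[symmetric] by (simp_all add: power2_eq_square)
  hence "0 \<le> r" "r \<le> m" using m by (simp_all add: zero_le_mult_iff)
  moreover have "r \<noteq> 0" "r \<noteq> m"
    using four_squares_descent_degenerate[OF _ _ x r dvd bound] not_dvd m by auto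
  moreover have "sum_of_four_squares (r * p)"
    by (rule four_squares_descent_step[OF _ x r dvd]) (use m in simp)
  ultimately show ?thesis by (intro exI[of _ r]) auto
qed

lemma prime_multiple_sum_of_four_squares:
  fixes p :: int
  assumes p: "prime p"
  shows "\<exists>m. 0 < m \<and> m < p \<and> sum_of_four_squares (m * p)"
proof (cases "p = 2")
  case True
  thus ?thesis using sum_of_four_squares_2 by (intro exI[of _ 1]) simp
next
  case False
  have p2: "p \<ge> 2" using p prime_ge_2_int by blast
  hence "odd p" using prime_odd_int[OF p] False by simp
  then obtain x y where xy: "0 \<le> x" "2*x < p" "0 \<le> y" "2*y < p" "p dvd x^2 + y^2 + 1"
    using odd_prime_dvd_sum_two_squares_plus_1[OF p] by blast
  obtain m where m: "x^2 + y^2 + 1 = p * m" using xy(5) by blast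
  have "(2*x)^2 \<le> (p - 1)^2" "(2*y)^2 \<le> (p - 1)^2" by (intro power_mono; use xy in simp)+
  moreover have "2 * p \<le> p * p" using p2 by (simp add: mult_right_mono)
  ultimately have "4 * (x^2 + y^2 + 1) < 4 * p^2"
    using p2 by (simp add: power2_eq_square algebra_simps, linarith)
  hence "p * m < p * p" using m by (simp add: power2_eq_square)
  hence "m < p" using p2 by simp
  moreover have "0 < p * m" unfolding m[symmetric] by (simp add: add_pos_nonneg)
  hence "0 < m" using p2 by (simp add: zero_less_mult_iff)
  moreover have "sum_of_four_squares (m * p)"
    unfolding sum_of_four_squares_def using m
    by (intro exI[of _ x] exI[of _ y] exI[of _ 1] exI[of _ 0]) (simp add: mult.commute)
  ultimately show ?thesis by blast
qed

text \<open>Descent on the least positive multiple of \<open>p\<close> that is a sum of four squares.\<close>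
lemma prime_sum_of_four_squares:
  fixes p :: int
  assumes p: "prime p"
  shows "sum_of_four_squares p"
proof -
  define P where "P m \<longleftrightarrow> 0 < m \<and> sum_of_four_squares (int m * p)" for m :: nat
  obtain m1 where m1: "0 < m1" "m1 < p" "sum_of_four_squares (m1 * p)"
    using prime_multiple_sum_of_four_squares[OF p] by blast
  have "P (nat m1)" unfolding P_def using m1 by simp
  define m0 where "m0 = (LEAST m. P m)"
  have P_m0: "P m0" unfolding m0_def by (rule LeastI) fact
  have "m0 \<le> nat m1" unfolding m0_def by (rule Least_le) fact
  have "m0 = 1"
  proof (rule ccontr)
    assume "m0 \<noteq> 1"
    hence gt: "1 < int m0" using P_m0 unfolding P_def by simp
    have lt: "int m0 < p" using \<open>m0 \<le> nat m1\<close> m1 by linarith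
    obtain a b c d where "int m0 * p = a^2 + b^2 + c^2 + d^2"
      using P_m0 unfolding P_def sum_of_four_squares_def by blast
    from four_squares_descent[OF p gt lt this]
    obtain r where r: "0 < r" "r < int m0" "sum_of_four_squares (r * p)" by blast
    hence "P (nat r)" unfolding P_def by simp
    hence "m0 \<le> nat r" unfolding m0_def by (rule Least_le)
    with r show False by simp
  qed
  thus ?thesis using P_m0 unfolding P_def by simp
qed

theorem sum_of_four_squares_nat: "sum_of_four_squares (int n)"
proof (induction n rule: prime_divisors_induct)
  case zero
  thus ?case using sum_of_four_squares_0 by simp
next
  case (unit x)
  thus ?case using sum_of_four_squares_1 by simp
next
  case (factor p x)
  hence "sum_of_four_squares (int p)"
    using prime_sum_of_four_squares prime_nat_int_transfer by blast
  thus ?case using sum_of_four_squares_mult factor(2) by simp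
qed

section \<open>\<open>C1\<close> as a signed count of representations\<close>

definition four_square_reps :: "nat \<Rightarrow> (int \<times> int \<times> int \<times> int) set" where
  "four_square_reps n = {(a, b, u, v). a^2 + b^2 + u^2 + v^2 = int n}"

definition matched_reps :: "nat \<Rightarrow> (int \<times> int \<times> int \<times> int) set" where
  "matched_reps n = {(a, b, u, v). a^2 + b^2 + u^2 + v^2 = int n \<and> even u = even v}"

definition rep_sign :: "int \<times> int \<times> int \<times> int \<Rightarrow> rat" where
  "rep_sign = (\<lambda>(a, b, u, v). parity_sign a * parity_sign b * parity_sign u)"

lemma parity_sign_add: "parity_sign (x + y) = parity_sign x * parity_sign y"
  unfolding parity_sign_def by auto

text \<open>The substitution \<open>u = c + d\<close>, \<open>v = c - d\<close> turns \<open>a\<^sup>2 + b\<^sup>2 + 2c\<^sup>2 + 2d\<^sup>2\<close>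
  into \<open>a\<^sup>2 + b\<^sup>2 + u\<^sup>2 + v\<^sup>2\<close> with \<open>u \<equiv> v (mod 2)\<close>.\<close>
lemma C1_eq_sum_rep_sign: "C1 n = (\<Sum>q\<in>matched_reps n. rep_sign q)"
proof -
  have "C1 n = (\<Sum>p\<in>{p. form1122 p = n}. sign1122 p)"
    unfolding C1_def C1_fps_eq[unfolded power_one_right] theta_product graded_gf_nth ..
  also have "\<dots> = (\<Sum>q\<in>matched_reps n. rep_sign q)"
  proof (rule sum.reindex_bij_witness[where i="\<lambda>(a, b, u, v). (((a, b), (u + v) div 2), (u - v) div 2)"
        and j="\<lambda>(((a, b), c), d). (a, b, c + d, c - d)"])
    fix q assume q: "q \<in> matched_reps n"
    obtain a b u v where q_eq: "q = (a, b, u, v)" by (metis prod.exhaust)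
    have e: "a^2 + b^2 + u^2 + v^2 = int n" and "even u = even v"
      using q unfolding q_eq matched_reps_def by auto
    then obtain c d where c: "u + v = 2*c" and d: "u - v = 2*d"
      by (metis dvd_def even_add even_diff)
    have uv: "u = c + d" "v = c - d" using c d by linarith+
    show "(\<lambda>(((a, b), c), d). (a, b, c + d, c - d)) ((\<lambda>(a, b, u, v). (((a, b), (u + v) div 2), (u - v) div 2)) q) = q"
      unfolding q_eq by (simp add: c d uv)
    have "int n = a^2 + b^2 + 2*c^2 + 2*d^2"
      using e unfolding uv by (simp add: power2_eq_square algebra_simps)
    moreover have "int (nat (a^2) + nat (b^2) + 2 * nat (c^2) + 2 * nat (d^2)) = a^2 + b^2 + 2*c^2 + 2*d^2"
      by simp
    ultimately have "nat (a^2) + nat (b^2) + 2 * nat (c^2) + 2 * nat (d^2) = n" by linarith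
    thus "(\<lambda>(a, b, u, v). (((a, b), (u + v) div 2), (u - v) div 2)) q \<in> {p. form1122 p = n}"
      unfolding q_eq form1122_def by (simp add: c d)
  next
    fix p assume p: "p \<in> {p. form1122 p = n}"
    obtain a b c d where p_eq: "p = (((a, b), c), d)" by (metis prod.exhaust)
    show "(\<lambda>(a, b, u, v). (((a, b), (u + v) div 2), (u - v) div 2)) ((\<lambda>(((a, b), c), d). (a, b, c + d, c - d)) p) = p"
      unfolding p_eq by simp
    have "int (nat (a^2) + nat (b^2) + 2 * nat (c^2) + 2 * nat (d^2)) = int n"
      using p unfolding p_eq form1122_def by simp
    hence "a^2 + b^2 + (c + d)^2 + (c - d)^2 = int n"
      by (simp add: power2_eq_square algebra_simps)
    thus "(\<lambda>(((a, b), c), d). (a, b, c + d, c - d)) p \<in> matched_reps n"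
      unfolding p_eq matched_reps_def by auto
    show "rep_sign ((\<lambda>(((a, b), c), d). (a, b, c + d, c - d)) p) = sign1122 p"
      unfolding p_eq rep_sign_def sign1122_def by (simp add: parity_sign_add mult.assoc)
  qed
  finally show ?thesis .
qed

lemma finite_four_square_reps: "finite (four_square_reps n)"
proof (rule finite_subset)
  let ?I = "{-int n..int n}"
  show "four_square_reps n \<subseteq> ?I \<times> ?I \<times> ?I \<times> ?I"
  proof
    fix q assume "q \<in> four_square_reps n"
    then obtain a b u v where q: "q = (a, b, u, v)" and e: "a^2 + b^2 + u^2 + v^2 = int n"
      unfolding four_square_reps_def by auto
    have "a^2 \<le> int n" "b^2 \<le> int n" "u^2 \<le> int n" "v^2 \<le> int n"
      using e by (smt (verit) zero_le_power2)+
    hence "\<bar>a\<bar> \<le> int n" "\<bar>b\<bar> \<le> int n" "\<bar>u\<bar> \<le> int n" "\<bar>v\<bar> \<le> int n"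
      using abs_le_square[of a] abs_le_square[of b] abs_le_square[of u] abs_le_square[of v] by linarith+
    thus "q \<in> ?I \<times> ?I \<times> ?I \<times> ?I" unfolding q by (auto simp: abs_le_iff)
  qed
qed simp

lemma matched_reps_subset: "matched_reps n \<subseteq> four_square_reps n"
  unfolding matched_reps_def four_square_reps_def by auto

lemma finite_matched_reps: "finite (matched_reps n)"
  using finite_subset[OF matched_reps_subset finite_four_square_reps] .

text \<open>Of four integers, two have the same parity; they become \<open>u\<close> and \<open>v\<close>.\<close>
lemma matched_reps_nonempty: "matched_reps n \<noteq> {}"
proof -
  obtain a b c d where e: "int n = a^2 + b^2 + c^2 + d^2"
    using sum_of_four_squares_nat[of n] unfolding sum_of_four_squares_def by blast
  consider "even c = even d" | "even a = even c" | "even a = even d" by blast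
  thus ?thesis
  proof cases
    case 1
    hence "(a, b, c, d) \<in> matched_reps n" unfolding matched_reps_def using e by simp
    thus ?thesis by blast
  next
    case 2
    hence "(b, d, a, c) \<in> matched_reps n" unfolding matched_reps_def using e by (simp add: algebra_simps)
    thus ?thesis by blast
  next
    case 3
    hence "(b, c, a, d) \<in> matched_reps n" unfolding matched_reps_def using e by (simp add: algebra_simps)
    thus ?thesis by blast
  qed
qed

lemma card_matched_reps_pos: "card (matched_reps n) > 0"
  using matched_reps_nonempty finite_matched_reps card_gt_0_iff by blast

lemma four_square_reps_nonempty: "four_square_reps n \<noteq> {}"
  using matched_reps_nonempty matched_reps_subset by blast

lemma C1_eq_card_if_constant_sign:
  assumes "\<And>q. q \<in> matched_reps n \<Longrightarrow> rep_sign q = s"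
  shows "C1 n = s * of_nat (card (matched_reps n))"
  unfolding C1_eq_sum_rep_sign using assms by simp

section \<open>The sign of \<open>C1\<close>\<close>

lemma square_mod_4: "(t::int)^2 mod 4 = (if even t then 0 else 1)"
proof (cases "even t")
  case True
  then obtain s where "t = 2*s" by blast
  thus ?thesis by (simp add: power2_eq_square)
next
  case False
  then obtain s where "t = 2*s + 1" using oddE by blast
  hence "t^2 = 4*(s*s + s) + 1" by (simp add: power2_eq_square algebra_simps)
  moreover have "(4*r + 1) mod 4 = 1" for r :: int by presburger
  ultimately have "t^2 mod 4 = 1" by (simp only:)
  thus ?thesis using False by simp
qed

lemma odd_square_mod_8: "odd (t::int) \<Longrightarrow> t^2 mod 8 = 1"
proof -
  assume "odd t"
  then obtain s where s: "t = 2*s + 1" using oddE by blast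
  obtain r where "s*s + s = 2*r" by (metis dvd_def even_mult_iff even_add)
  hence "t^2 = 8*r + 1" unfolding s by (simp add: power2_eq_square algebra_simps)
  thus ?thesis by simp
qed

lemma matched_reps_parity:
  assumes "(a, b, u, v) \<in> matched_reps n"
  shows "n mod 4 = 1 \<Longrightarrow> even u \<and> even v \<and> even a \<noteq> even b"
    and "n mod 4 = 3 \<Longrightarrow> odd u \<and> odd v \<and> even a \<noteq> even b"
    and "n mod 4 = 2 \<Longrightarrow> (even u \<and> even v \<and> odd a \<and> odd b) \<or> (odd u \<and> odd v \<and> even a \<and> even b)"
    and "n mod 4 = 0 \<Longrightarrow> (even a \<and> even b \<and> even u \<and> even v) \<or> (odd a \<and> odd b \<and> odd u \<and> odd v)"
proof -
  have sum: "a^2 + b^2 + u^2 + v^2 = int n" and uv: "even u = even v"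
    using assms unfolding matched_reps_def by auto
  have "int (n mod 4) = (a^2 + b^2 + u^2 + v^2) mod 4"
    unfolding sum by (simp add: zmod_int)
  also have "\<dots> = (a^2 mod 4 + b^2 mod 4 + u^2 mod 4 + v^2 mod 4) mod 4"
    by (intro mod_add_cong) simp_all
  finally have key: "int (n mod 4) = ((if even a then 0 else 1) + (if even b then 0 else 1)
      + (if even u then 0 else 1) + (if even v then 0 else 1)) mod 4"
    by (simp only: square_mod_4)
  show "n mod 4 = 1 \<Longrightarrow> even u \<and> even v \<and> even a \<noteq> even b"
    using key uv by (cases "even a"; cases "even b"; cases "even u") auto
  show "n mod 4 = 3 \<Longrightarrow> odd u \<and> odd v \<and> even a \<noteq> even b"
    using key uv by (cases "even a"; cases "even b"; cases "even u") auto
  show "n mod 4 = 2 \<Longrightarrow> (even u \<and> even v \<and> odd a \<and> odd b) \<or> (odd u \<and> odd v \<and> even a \<and> even b)"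
    using key uv by (cases "even a"; cases "even b"; cases "even u") auto
  show "n mod 4 = 0 \<Longrightarrow> (even a \<and> even b \<and> even u \<and> even v) \<or> (odd a \<and> odd b \<and> odd u \<and> odd v)"
    using key uv by (cases "even a"; cases "even b"; cases "even u") auto
qed

lemma C1_neg_if_mod_4_eq_1:
  assumes "n mod 4 = 1"
  shows "C1 n < 0"
proof -
  have "C1 n = -1 * of_nat (card (matched_reps n))"
  proof (rule C1_eq_card_if_constant_sign)
    fix q assume q: "q \<in> matched_reps n"
    obtain a b u v where q_eq: "q = (a, b, u, v)" by (metis prod.exhaust)
    show "rep_sign q = -1"
      using matched_reps_parity(1)[OF q[unfolded q_eq] assms] unfolding q_eq
      by (auto simp: rep_sign_def parity_sign_def)
  qed
  thus ?thesis using card_matched_reps_pos[of n] by simp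
qed

lemma C1_pos_if_mod_4_eq_3:
  assumes "n mod 4 = 3"
  shows "C1 n > 0"
proof -
  have "C1 n = 1 * of_nat (card (matched_reps n))"
  proof (rule C1_eq_card_if_constant_sign)
    fix q assume q: "q \<in> matched_reps n"
    obtain a b u v where q_eq: "q = (a, b, u, v)" by (metis prod.exhaust)
    show "rep_sign q = 1"
      using matched_reps_parity(2)[OF q[unfolded q_eq] assms] unfolding q_eq
      by (auto simp: rep_sign_def parity_sign_def)
  qed
  thus ?thesis using card_matched_reps_pos[of n] by simp
qed

text \<open>Exchanging \<open>(a, b)\<close> with \<open>(u, v)\<close> is a sign-reversing involution.\<close>
lemma C1_eq_0_if_mod_4_eq_2:
  assumes n: "n mod 4 = 2"
  shows "C1 n = 0"
proof -
  define swap :: "int \<times> int \<times> int \<times> int \<Rightarrow> int \<times> int \<times> int \<times> int"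
    where "swap = (\<lambda>(a, b, u, v). (u, v, a, b))"
  have swap_mem: "swap q \<in> matched_reps n" and swap_sign: "rep_sign (swap q) = - rep_sign q"
    if q: "q \<in> matched_reps n" for q
  proof -
    obtain a b u v where q_eq: "q = (a, b, u, v)" by (metis prod.exhaust)
    note parity = matched_reps_parity(3)[OF q[unfolded q_eq] n]
    show "swap q \<in> matched_reps n"
      using q parity unfolding q_eq swap_def matched_reps_def by (auto simp: algebra_simps)
    show "rep_sign (swap q) = - rep_sign q"
      using parity unfolding q_eq swap_def rep_sign_def parity_sign_def by auto
  qed
  have swap_swap: "swap (swap q) = q" for q
    by (simp add: swap_def split: prod.splits)
  have "C1 n = (\<Sum>q\<in>matched_reps n. rep_sign (swap q))"
    unfolding C1_eq_sum_rep_sign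
    by (rule sum.reindex_bij_witness[where i=swap and j=swap]) (auto simp: swap_swap swap_mem)
  also have "\<dots> = - C1 n"
    unfolding C1_eq_sum_rep_sign by (simp add: swap_sign sum_negf)
  finally show ?thesis by simp
qed

lemma C1_pos_if_mod_8_eq_0:
  assumes n: "n mod 8 = 0"
  shows "C1 n > 0"
proof -
  have "C1 n = 1 * of_nat (card (matched_reps n))"
  proof (rule C1_eq_card_if_constant_sign)
    fix q assume q: "q \<in> matched_reps n"
    obtain a b u v where q_eq: "q = (a, b, u, v)" by (metis prod.exhaust)
    have "\<not> (odd a \<and> odd b \<and> odd u \<and> odd v)"
    proof
      assume "odd a \<and> odd b \<and> odd u \<and> odd v"
      hence "a^2 mod 8 = 1" "b^2 mod 8 = 1" "u^2 mod 8 = 1" "v^2 mod 8 = 1"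
        using odd_square_mod_8 by blast+
      moreover have "(a^2 + b^2 + u^2 + v^2) mod 8 = (a^2 mod 8 + b^2 mod 8 + u^2 mod 8 + v^2 mod 8) mod 8"
        by (intro mod_add_cong) simp_all
      moreover have "a^2 + b^2 + u^2 + v^2 = int n" using q unfolding q_eq matched_reps_def by simp
      ultimately have "int (n mod 8) = 4" by (simp add: zmod_int)
      with n show False by simp
    qed
    moreover have "n mod 4 = 0" using n by presburger
    ultimately show "rep_sign q = 1"
      using matched_reps_parity(4)[of a b u v n] q unfolding q_eq
      by (auto simp: rep_sign_def parity_sign_def)
  qed
  thus ?thesis using card_matched_reps_pos[of n] by simp
qed

definition all_even :: "int \<times> int \<times> int \<times> int \<Rightarrow> bool" where
  "all_even = (\<lambda>(a, b, u, v). even a \<and> even b \<and> even u \<and> even v)"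

definition all_odd :: "int \<times> int \<times> int \<times> int \<Rightarrow> bool" where
  "all_odd = (\<lambda>(a, b, u, v). odd a \<and> odd b \<and> odd u \<and> odd v)"

definition hadamard4 :: "int \<Rightarrow> int \<times> int \<times> int \<times> int \<Rightarrow> int \<times> int \<times> int \<times> int" where
  "hadamard4 s = (\<lambda>(a, b, c, d). (s * (a + b + c + d), a + b - c - d, a - b + c - d, a - b - c + d))"

lemma hadamard4_mem:
  assumes s: "s = 1 \<or> s = -1" and j: "odd j" and q: "q \<in> four_square_reps j"
  shows "hadamard4 s q \<in> {q \<in> matched_reps (4*j). all_odd q}"
proof -
  obtain a b c d where q_eq: "q = (a, b, c, d)" by (metis prod.exhaust)
  have e: "a^2 + b^2 + c^2 + d^2 = int j" using q unfolding q_eq four_square_reps_def by simp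
  hence "odd (a^2 + b^2 + c^2 + d^2)" using j by simp
  hence "odd (a + b + c + d)" by simp
  hence "odd (a + b + c + d) \<and> odd (a + b - c - d) \<and> odd (a - b + c - d) \<and> odd (a - b - c + d)"
    by presburger
  moreover have "(s * (a + b + c + d))^2 + (a + b - c - d)^2 + (a - b + c - d)^2 + (a - b - c + d)^2
      = int (4*j)"
    using s e by (auto simp: power2_eq_square algebra_simps)
  ultimately show ?thesis
    using s unfolding q_eq hadamard4_def matched_reps_def all_odd_def by auto
qed

lemma inj_hadamard4:
  assumes "s \<noteq> 0"
  shows "inj (hadamard4 s)"
proof (rule injI)
  fix q q' assume eq: "hadamard4 s q = hadamard4 s q'"
  obtain a b c d where q: "q = (a, b, c, d)" by (metis prod.exhaust)
  obtain a' b' c' d' where q': "q' = (a', b', c', d')" by (metis prod.exhaust)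
  have "a + b + c + d = a' + b' + c' + d'" "a + b - c - d = a' + b' - c' - d'"
    "a - b + c - d = a' - b' + c' - d'" "a - b - c + d = a' - b' - c' + d'"
    using eq assms unfolding q q' hadamard4_def by auto
  hence "a = a'" "b = b'" "c = c'" "d = d'" by linarith+
  thus "q = q'" unfolding q q' by simp
qed

lemma hadamard4_images_disjoint:
  assumes "odd j" "q \<in> four_square_reps j"
  shows "hadamard4 1 q \<noteq> hadamard4 (-1) q'"
proof
  assume eq: "hadamard4 1 q = hadamard4 (-1) q'"
  obtain a b c d where q: "q = (a, b, c, d)" by (metis prod.exhaust)
  obtain a' b' c' d' where q': "q' = (a', b', c', d')" by (metis prod.exhaust)
  have "a + b + c + d = -(a' + b' + c' + d')" "a + b - c - d = a' + b' - c' - d'"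
    "a - b + c - d = a' - b' + c' - d'" "a - b - c + d = a' - b' - c' + d'"
    using eq unfolding q q' hadamard4_def by auto
  hence "a + b + c + d = 2 * (a - a')" by algebra
  hence "even (a + b + c + d)" by (simp only:) simp
  moreover have "all_odd (hadamard4 1 q)" using hadamard4_mem[OF _ assms] by simp
  hence "odd (a + b + c + d)" unfolding q hadamard4_def all_odd_def by simp
  ultimately show False by simp
qed

lemma card_all_even_matched_reps:
  "card {q \<in> matched_reps (4*j). all_even q} \<le> card (four_square_reps j)"
proof -
  define double :: "int \<times> int \<times> int \<times> int \<Rightarrow> int \<times> int \<times> int \<times> int"
    where "double = (\<lambda>(a, b, u, v). (2*a, 2*b, 2*u, 2*v))"
  have "{q \<in> matched_reps (4*j). all_even q} \<subseteq> double ` four_square_reps j"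
  proof
    fix q assume q: "q \<in> {q \<in> matched_reps (4*j). all_even q}"
    then obtain a b u v where q_eq: "q = (2*a, 2*b, 2*u, 2*v)"
      unfolding all_even_def by (auto elim!: evenE)
    have "4 * (a^2 + b^2 + u^2 + v^2) = 4 * int j"
      using q unfolding q_eq matched_reps_def by (simp add: power2_eq_square algebra_simps)
    hence "(a, b, u, v) \<in> four_square_reps j" unfolding four_square_reps_def by simp
    thus "q \<in> double ` four_square_reps j" unfolding q_eq double_def by force
  qed
  hence "card {q \<in> matched_reps (4*j). all_even q} \<le> card (double ` four_square_reps j)"
    by (intro card_mono finite_imageI finite_four_square_reps)
  also have "\<dots> \<le> card (four_square_reps j)" by (rule card_image_le[OF finite_four_square_reps])
  finally show ?thesis .
qed

lemma card_all_odd_matched_reps: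
  assumes "odd j"
  shows "2 * card (four_square_reps j) \<le> card {q \<in> matched_reps (4*j). all_odd q}"
proof -
  let ?R = "four_square_reps j"
  have "hadamard4 1 ` ?R \<union> hadamard4 (-1) ` ?R \<subseteq> {q \<in> matched_reps (4*j). all_odd q}"
    using hadamard4_mem[OF _ assms] by blast
  moreover have "finite {q \<in> matched_reps (4*j). all_odd q}" using finite_matched_reps by simp
  ultimately have "card (hadamard4 1 ` ?R \<union> hadamard4 (-1) ` ?R) \<le> card {q \<in> matched_reps (4*j). all_odd q}"
    by (rule card_mono[rotated])
  moreover have "hadamard4 1 ` ?R \<inter> hadamard4 (-1) ` ?R = {}"
  proof (rule equals0I)
    fix x assume "x \<in> hadamard4 1 ` ?R \<inter> hadamard4 (-1) ` ?R"
    then obtain q q' where q: "q \<in> ?R" and "x = hadamard4 1 q" "x = hadamard4 (-1) q'" by blast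
    hence "hadamard4 1 q = hadamard4 (-1) q'" by simp
    with hadamard4_images_disjoint[OF assms q, of q'] show False by contradiction
  qed
  hence "card (hadamard4 1 ` ?R \<union> hadamard4 (-1) ` ?R) = card (hadamard4 1 ` ?R) + card (hadamard4 (-1) ` ?R)"
    using finite_four_square_reps by (intro card_Un_disjoint) auto
  moreover have "card (hadamard4 s ` ?R) = card ?R" if "s \<noteq> 0" for s
    using inj_hadamard4[OF that] by (simp add: card_image inj_on_subset)
  ultimately show ?thesis by simp
qed

text \<open>Halving embeds the all-even representations of \<open>4j\<close> (sign \<open>+1\<close>) into those of \<open>j\<close>,
  while the Hadamard matrix, with either sign of its first row, maps the representations of odd \<open>j\<close>
  to twice as many all-odd ones (sign \<open>-1\<close>).\<close>
lemma C1_neg_if_mod_8_eq_4: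
  assumes n: "n mod 8 = 4"
  shows "C1 n < 0"
proof -
  define j where "j = n div 4"
  have n_eq: "n = 4*j" and j: "odd j" unfolding j_def using n by presburger+
  define Ev where "Ev = {q \<in> matched_reps n. all_even q}"
  define Od where "Od = {q \<in> matched_reps n. all_odd q}"
  have n4: "n mod 4 = 0" using n by presburger
  have "matched_reps n = Ev \<union> Od"
  proof (intro equalityI subsetI)
    fix q assume q: "q \<in> matched_reps n"
    obtain a b u v where q_eq: "q = (a, b, u, v)" by (metis prod.exhaust)
    show "q \<in> Ev \<union> Od"
      using matched_reps_parity(4)[OF q[unfolded q_eq] n4] q
      unfolding q_eq Ev_def Od_def all_even_def all_odd_def by auto
  qed (auto simp: Ev_def Od_def)
  moreover have "Ev \<inter> Od = {}" "finite Ev" "finite Od"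
    unfolding Ev_def Od_def all_even_def all_odd_def using finite_matched_reps by auto
  ultimately have "C1 n = (\<Sum>q\<in>Ev. rep_sign q) + (\<Sum>q\<in>Od. rep_sign q)"
    unfolding C1_eq_sum_rep_sign by (simp add: sum.union_disjoint)
  also have "\<dots> = (\<Sum>q\<in>Ev. 1) + (\<Sum>q\<in>Od. -1)"
    unfolding Ev_def Od_def all_even_def all_odd_def rep_sign_def parity_sign_def
    by (intro arg_cong2[where f = "(+)"] sum.cong) auto
  also have "\<dots> = of_nat (card Ev) - of_nat (card Od)" by simp
  finally have "C1 n = of_nat (card Ev) - of_nat (card Od)" .
  moreover have "card (four_square_reps j) > 0"
    using four_square_reps_nonempty finite_four_square_reps by (simp add: card_gt_0_iff)
  hence "card Ev < card Od"
    using card_all_even_matched_reps[of j] card_all_odd_matched_reps[OF j]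
    unfolding Ev_def Od_def n_eq by linarith
  ultimately show ?thesis by simp
qed

definition C1_sign :: "nat \<Rightarrow> rat" where
  "C1_sign n = (if n mod 8 \<in> {0, 3, 7} then 1 else if n mod 8 \<in> {1, 4, 5} then -1 else 0)"

lemma mod_8_cases:
  "(n::nat) mod 8 = 0 \<or> n mod 8 = 1 \<or> n mod 8 = 2 \<or> n mod 8 = 3 \<or>
   n mod 8 = 4 \<or> n mod 8 = 5 \<or> n mod 8 = 6 \<or> n mod 8 = 7"
proof -
  have "x < 8 \<Longrightarrow> x = 0 \<or> x = 1 \<or> x = 2 \<or> x = 3 \<or> x = 4 \<or> x = 5 \<or> x = 6 \<or> x = 7" for x :: nat
    by (simp add: less_Suc_eq numeral_eq_Suc)
  thus ?thesis by simp
qed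

lemma sgn_C1: "sgn (C1 n) = C1_sign n"
proof -
  have "n mod 4 = 1" if "n mod 8 = 1 \<or> n mod 8 = 5" using that by presburger
  moreover have "n mod 4 = 3" if "n mod 8 = 3 \<or> n mod 8 = 7" using that by presburger
  moreover have "n mod 4 = 2" if "n mod 8 = 2 \<or> n mod 8 = 6" using that by presburger
  ultimately show ?thesis
    using mod_8_cases[of n] C1_neg_if_mod_4_eq_1[of n] C1_pos_if_mod_4_eq_3[of n]
      C1_eq_0_if_mod_4_eq_2[of n] C1_pos_if_mod_8_eq_0[of n] C1_neg_if_mod_8_eq_4[of n]
    unfolding C1_sign_def by (elim disjE) simp_all
qed

section \<open>The sign of \<open>C2\<close>\<close>

definition C2_sign :: "nat \<Rightarrow> rat" where
  "C2_sign n = (if n mod 8 \<in> {0, 3, 6, 7} then 1 else -1)"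

lemma C2_eq_convolution: "C2 n = (\<Sum>i=0..n. C1 i * theta 2 $ (n - i))"
proof -
  have "theta 1 ^ 2 * theta 2 ^ 3 = (theta 1 ^ 2 * theta 2 ^ 2) * theta 2"
    by (simp add: power2_eq_square power3_eq_cube ac_simps)
  hence "C2 n = ((theta 1 ^ 2 * theta 2 ^ 2) * theta 2) $ n"
    unfolding C2_def C2_fps_eq[unfolded power_one_right] by (rule arg_cong)
  thus ?thesis
    unfolding fps_mult_nth C1_def C1_fps_eq[unfolded power_one_right] .
qed

lemma theta_nth_eq_card:
  assumes k: "k \<ge> 1" and t: "k * nat (t^2) = m"
  shows "theta k $ m = of_nat (card {t::int. k * nat (t^2) = m}) * parity_sign t"
proof -
  have "parity_sign t' = parity_sign t" if "k * nat (t'^2) = m" for t'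
  proof -
    have "k * nat (t'^2) = k * nat (t^2)" using that t by simp
    hence "nat (t'^2) = nat (t^2)" using k by simp
    hence "t'^2 = t^2" by (simp add: eq_nat_nat_iff)
    hence "t' = t \<or> t' = -t" by (simp add: power2_eq_iff)
    thus ?thesis by (auto simp: parity_sign_def)
  qed
  thus ?thesis unfolding theta_nth by simp
qed

text \<open>A term \<open>t\<close> of \<open>theta 2\<close> shifts the residue of \<open>n\<close> modulo \<open>8\<close> by \<open>2t\<^sup>2\<close>, which is
  \<open>0\<close> or \<open>2\<close> according to the parity of \<open>t\<close>; against the table of signs of \<open>C1\<close> this always
  reproduces the sign of \<open>C2 n\<close>, or gives \<open>0\<close>.\<close>
lemma C1_sign_times_parity_sign:
  assumes "i + 2 * nat (t^2) = n"
  shows "C1_sign i * parity_sign t \<in> {0, C2_sign n}"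
proof -
  define s where "s = nat (t^2)"
  have "int (s mod 4) = t^2 mod 4" unfolding s_def by (simp add: zmod_int)
  hence s: "s mod 4 = (if even t then 0 else 1)" unfolding square_mod_4 by auto
  have "n = (i + 2 * (s mod 4)) + 8 * (s div 4)"
    using assms div_mult_mod_eq[of s 4] unfolding s_def[symmetric] by linarith
  hence "n mod 8 = (i + 2 * (s mod 4)) mod 8" by simp
  hence "n mod 8 = (i mod 8 + 2 * (s mod 4)) mod 8" by (simp add: mod_add_left_eq)
  thus ?thesis
    using s mod_8_cases[of i] unfolding C1_sign_def C2_sign_def parity_sign_def
    by (cases "even t"; elim disjE; simp)
qed

lemma C2_term_eq:
  assumes "i + 2 * nat (t^2) = n"
  shows "C2_sign n * (C1 i * theta 2 $ (n - i))
    = of_nat (card {t::int. 2 * nat (t^2) = n - i}) * \<bar>C1 i\<bar> * (C2_sign n * (C1_sign i * parity_sign t))"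
proof -
  have "theta 2 $ (n - i) = of_nat (card {t::int. 2 * nat (t^2) = n - i}) * parity_sign t"
    using assms by (intro theta_nth_eq_card) auto
  moreover have "C1 i = C1_sign i * \<bar>C1 i\<bar>"
    by (simp add: sgn_C1[symmetric] sgn_mult_abs)
  ultimately show ?thesis by (simp add: ac_simps)
qed

lemma C2_sign_squared: "C2_sign n * C2_sign n = 1"
  by (simp add: C2_sign_def)

lemma C2_term_nonneg:
  assumes "i \<le> n"
  shows "0 \<le> C2_sign n * (C1 i * theta 2 $ (n - i))"
proof (cases "\<exists>t::int. 2 * nat (t^2) = n - i")
  case True
  then obtain t :: int where "2 * nat (t^2) = n - i" by blast
  hence t: "i + 2 * nat (t^2) = n" using assms by simp
  from C1_sign_times_parity_sign[OF t] have "C2_sign n * (C1_sign i * parity_sign t) \<in> {0, 1}"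
    using C2_sign_squared by auto
  thus ?thesis unfolding C2_term_eq[OF t] by auto
next
  case False
  thus ?thesis by (simp add: theta_nth)
qed

lemma C2_term_pos:
  assumes t: "i + 2 * nat (t^2) = n" and "C1_sign i \<noteq> 0"
  shows "0 < C2_sign n * (C1 i * theta 2 $ (n - i))"
proof -
  have "parity_sign t \<noteq> 0" by (simp add: parity_sign_def)
  hence "C2_sign n * (C1_sign i * parity_sign t) = 1"
    using C1_sign_times_parity_sign[OF t] assms(2) C2_sign_squared by auto
  moreover have "C1 i \<noteq> 0" using assms(2) sgn_C1[of i] by auto
  moreover have "card {t::int. 2 * nat (t^2) = n - i} > 0"
    using t finite_theta_fiber[of 2 "n - i"] by (auto simp: card_gt_0_iff)
  ultimately show ?thesis unfolding C2_term_eq[OF t] by simp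
qed

text \<open>All terms of the convolution have the sign \<open>C2_sign n\<close> or vanish; the term with \<open>t = 0\<close>
  (or \<open>t = 1\<close> when \<open>n \<equiv> 2 (mod 4)\<close>, where \<open>C1 n = 0\<close>) does not vanish.\<close>
lemma sgn_C2: "sgn (C2 n) = C2_sign n"
proof -
  obtain i :: nat and t :: int where t: "i + 2 * nat (t^2) = n" and i: "C1_sign i \<noteq> 0"
  proof (cases "n mod 4 = 2")
    case True
    define m where "m = n - 2"
    have "n \<ge> 2" using True by presburger
    hence n_eq: "n = m + 2" unfolding m_def by simp
    have "m mod 4 = 0" using True unfolding n_eq by presburger
    hence "m mod 8 = 0 \<or> m mod 8 = 4" by presburger
    hence "C1_sign m \<noteq> 0" by (auto simp: C1_sign_def)
    thus ?thesis using that[of m 1] n_eq by simp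
  next
    case False
    hence "n mod 8 \<noteq> 2" "n mod 8 \<noteq> 6" by presburger+
    hence "C1_sign n \<noteq> 0" using mod_8_cases[of n] by (auto simp: C1_sign_def)
    thus ?thesis using that[of n 0] by simp
  qed
  have "0 < (\<Sum>i=0..n. C2_sign n * (C1 i * theta 2 $ (n - i)))"
    using t C2_term_nonneg C2_term_pos[OF t i] by (intro sum_pos2[of _ i]) auto
  hence "0 < C2_sign n * C2 n"
    by (simp add: C2_eq_convolution sum_distrib_left)
  thus ?thesis unfolding C2_sign_def by (auto simp: sgn_if zero_less_mult_iff split: if_splits)
qed

theorem theorem1p4:
  shows "(\<forall>n\<ge>1. sgn (C1 (n + 8)) = sgn (C1 n)) \<and>
         (\<forall>n\<ge>1. (n mod 8 \<in> {0, 3, 7} \<longrightarrow> sgn (C1 n) = 1) \<and>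
                  (n mod 8 \<in> {1, 4, 5} \<longrightarrow> sgn (C1 n) = -1) \<and>
                  (n mod 4 = 2 \<longrightarrow> sgn (C1 n) = 0)) \<and>
         (\<forall>n\<ge>1. sgn (C2 (n + 8)) = sgn (C2 n)) \<and>
         (\<forall>n\<ge>1. (n mod 8 \<in> {0, 3, 6, 7} \<longrightarrow> sgn (C2 n) = 1) \<and>
                  (n mod 8 \<in> {1, 2, 4, 5} \<longrightarrow> sgn (C2 n) = -1))"
proof (intro conjI allI impI)
  fix n :: nat
  show "sgn (C1 (n + 8)) = sgn (C1 n)" "sgn (C2 (n + 8)) = sgn (C2 n)"
    unfolding sgn_C1 sgn_C2 C1_sign_def C2_sign_def by simp_all
  show "n mod 8 \<in> {0, 3, 7} \<Longrightarrow> sgn (C1 n) = 1"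
    and "n mod 8 \<in> {1, 4, 5} \<Longrightarrow> sgn (C1 n) = -1"
    and "n mod 8 \<in> {0, 3, 6, 7} \<Longrightarrow> sgn (C2 n) = 1"
    and "n mod 8 \<in> {1, 2, 4, 5} \<Longrightarrow> sgn (C2 n) = -1"
    unfolding sgn_C1 sgn_C2 C1_sign_def C2_sign_def by auto
  assume "n mod 4 = 2"
  hence "n mod 8 = 2 \<or> n mod 8 = 6" by presburger
  thus "sgn (C1 n) = 0" unfolding sgn_C1 C1_sign_def by auto
qed

end
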